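(* Let $(M,d)$ be a compact metric space and $\varphi:M\to M$ continuous with $h_{\rm Top}(\varphi)<\infty$ and $\mathbb Q\mapsto h_\varphi(\mathbb Q)$ upper semicontinuous on $\mathcal P_\varphi(M)$. Let $\mathbb P\in\mathcal P(M)$ be a weak Gibbs measure for $\mathcal G\in\mathcal A(M)$. Then for every $\mathcal G'=\{G_n'\}\in\mathcal A(M)$, $$\lim_{n\to\infty}\frac1n\log\int_Me^{G_n'}\,d\mathbb P=\mathfrak p_\varphi(\mathcal G+\mathcal G')-\mathfrak p_\varphi(\mathcal G).$$
   Context: $C(M),B(M)$: continuous/bounded Borel real functions, sup norm; $\mathcal P_\varphi(M)$ invariant Borel probability measures; $h_\varphi$ Kolmogorov–Sinai entropy, $h_{\rm Top}$ topological entropy; $S_nG=\sum_{k<n}G\circ\varphi^k$; $B_n(x,\epsilon)=\{y:d(\varphi^ky,\varphi^kx)<\epsilon,0\le k<n\}$. $\mathcal A(M)$: $\{G_n\}\subset B(M)$ such that some $\{G^{(k)}\}\subset C(M)$ has $\lim_k\limsup_nn^{-1}\|G_n-S_nG^{(k)}\|_\infty=0$; sums termwise. Pressure $\mathfrak p_\varphi(\mathcal G)=\lim_{\epsilon\downarrow0}\limsup_nn^{-1}\log\inf\{\sum_{x\in E}e^{G_n(x)}:E\text{ finite},\bigcup_{x\in E}B_n(x,\epsilon)=M\}$. Weak Gibbs for $\mathcal G$: for every $n\ge1,\epsilon>0$ there is $K_n(\epsilon)\ge1$ with $K_n(\epsilon)^{-1}e^{G_n(x)-n\mathfrak p_\varphi(\mathcal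 G)}\le\mathbb P(B_n(x,\epsilon))\le K_n(\epsilon)e^{G_n(x)-n\mathfrak p_\varphi(\mathcal G)}$ for every $x\in M$, and $\lim_{\epsilon\downarrow0}\limsup_nn^{-1}\log K_n(\epsilon)=0$. *)

theory Defs
  imports "HOL-Probability.Probability"
begin

text \<open>The compact metric space M is the whole (compact) type 'a; the map is phi.\<close>

definition bowen_ball :: "('a::metric_space \<Rightarrow> 'a) \<Rightarrow> nat \<Rightarrow> 'a \<Rightarrow> real \<Rightarrow> 'a set" where
  "bowen_ball phi n x eps = {y. \<forall>k<n. dist ((phi ^^ k) y) ((phi ^^ k) x) < eps}"

definition birkhoff_sum :: "('a \<Rightarrow> 'a) \<Rightarrow> ('a \<Rightarrow> real) \<Rightarrow> nat \<Rightarrow> 'a \<Rightarrow> real" where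
  "birkhoff_sum phi G n x = (\<Sum>k<n. G ((phi ^^ k) x))"

definition sup_norm :: "('a \<Rightarrow> real) \<Rightarrow> real" where
  "sup_norm f = (SUP x. \<bar>f x\<bar>)"

definition bounded_borel :: "('a::metric_space \<Rightarrow> real) \<Rightarrow> bool" where
  "bounded_borel f \<longleftrightarrow> f \<in> borel_measurable borel \<and> bounded (range f)"

definition class_A :: "('a::metric_space \<Rightarrow> 'a) \<Rightarrow> (nat \<Rightarrow> 'a \<Rightarrow> real) \<Rightarrow> bool" where
  "class_A phi Gs \<longleftrightarrow> (\<forall>n. bounded_borel (Gs n)) \<and>
     (\<exists>Gk :: nat \<Rightarrow> 'a \<Rightarrow> real. (\<forall>k. continuous_on UNIV (Gk k)) \<and>
        ((\<lambda>k. limsup (\<lambda>n. ereal (sup_norm (\<lambda>x. Gs n x - birkhoff_sum phi (Gk k) n x) / real n)))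
          \<longlonglongrightarrow> 0))"

definition bowen_covers :: "('a::metric_space \<Rightarrow> 'a) \<Rightarrow> nat \<Rightarrow> real \<Rightarrow> 'a set set" where
  "bowen_covers phi n eps = {E. finite E \<and> (\<Union>x\<in>E. bowen_ball phi n x eps) = UNIV}"

definition pressure :: "('a::metric_space \<Rightarrow> 'a) \<Rightarrow> (nat \<Rightarrow> 'a \<Rightarrow> real) \<Rightarrow> ereal" where
  "pressure phi Gs = Lim (at_right 0) (\<lambda>eps::real.
      limsup (\<lambda>n. ereal (ln (Inf {\<Sum>x\<in>E. exp (Gs n x) | E. E \<in> bowen_covers phi n eps}) / real n)))"

definition top_entropy :: "('a::metric_space \<Rightarrow> 'a) \<Rightarrow> ereal" where
  "top_entropy phi = Lim (at_right 0) (\<lambda>eps::real.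
      limsup (\<lambda>n. ereal (ln (real (Inf {card E | E. E \<in> bowen_covers phi n eps})) / real n)))"

definition borel_prob :: "'a::metric_space measure \<Rightarrow> bool" where
  "borel_prob Q \<longleftrightarrow> prob_space Q \<and> sets Q = sets borel"

definition invariant_prob :: "('a::metric_space \<Rightarrow> 'a) \<Rightarrow> 'a measure \<Rightarrow> bool" where
  "invariant_prob phi Q \<longleftrightarrow> borel_prob Q \<and> phi \<in> measurable Q Q \<and> distr Q Q phi = Q"

text \<open>A finite measurable partition is encoded by a measurable
  labelling xi with finite range (cells are the fibres); the join of
  xi, xi o phi, ..., xi o phi^(n-1) is encoded by the list of labels.\<close>
definition partition_entropy :: "'a measure \<Rightarrow> ('a \<Rightarrow> 'b) \<Rightarrow> real" where
  "partition_entropy Q f = - (\<Sum>w\<in>range f. measure Q (f -` {w}) * ln (measure Q (f -` {w})))"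

definition join_labels :: "('a \<Rightarrow> 'a) \<Rightarrow> ('a \<Rightarrow> nat) \<Rightarrow> nat \<Rightarrow> 'a \<Rightarrow> nat list" where
  "join_labels phi xi n x = map (\<lambda>k. xi ((phi ^^ k) x)) [0..<n]"

definition ks_entropy :: "('a::metric_space \<Rightarrow> 'a) \<Rightarrow> 'a measure \<Rightarrow> ereal" where
  "ks_entropy phi Q = (SUP xi \<in> {xi :: 'a \<Rightarrow> nat. xi \<in> measurable borel (count_space UNIV) \<and> finite (range xi)}.
      ereal (lim (\<lambda>n. partition_entropy Q (join_labels phi xi n) / real n)))"

text \<open>Weak convergence of Borel probability measures and upper semicontinuity of the
  entropy map on the invariant measures (M compact metric, so the weak topology on P(M)
  is metrizable and sequential upper semicontinuity is upper semicontinuity).\<close>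
definition weak_conv :: "(nat \<Rightarrow> 'a::metric_space measure) \<Rightarrow> 'a measure \<Rightarrow> bool" where
  "weak_conv Qs Q \<longleftrightarrow> (\<forall>f :: 'a \<Rightarrow> real. continuous_on UNIV f \<and> bounded (range f) \<longrightarrow>
      (\<lambda>k. integral\<^sup>L (Qs k) f) \<longlonglongrightarrow> integral\<^sup>L Q f)"

definition entropy_usc :: "('a::metric_space \<Rightarrow> 'a) \<Rightarrow> bool" where
  "entropy_usc phi \<longleftrightarrow> (\<forall>Qs Q. (\<forall>k. invariant_prob phi (Qs k)) \<and> invariant_prob phi Q \<and> weak_conv Qs Q
      \<longrightarrow> limsup (\<lambda>k. ks_entropy phi (Qs k)) \<le> ks_entropy phi Q)"

text \<open>Weak Gibbs measure for Gs (pressure required to be a real number, as the definition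
  uses n times the pressure).\<close>
definition weak_gibbs :: "('a::metric_space \<Rightarrow> 'a) \<Rightarrow> (nat \<Rightarrow> 'a \<Rightarrow> real) \<Rightarrow> 'a measure \<Rightarrow> bool" where
  "weak_gibbs phi Gs P \<longleftrightarrow> borel_prob P \<and> \<bar>pressure phi Gs\<bar> \<noteq> \<infinity> \<and>
     (\<exists>K :: nat \<Rightarrow> real \<Rightarrow> real.
        (\<forall>n\<ge>1. \<forall>eps>0. K n eps \<ge> 1 \<and>
           (\<forall>x. exp (Gs n x - real n * real_of_ereal (pressure phi Gs)) / K n eps
                  \<le> measure P (bowen_ball phi n x eps)
              \<and> measure P (bowen_ball phi n x eps)
                  \<le> K n eps * exp (Gs n x - real n * real_of_ereal (pressure phi Gs)))) \<and>
        ((\<lambda>eps. limsup (\<lambda>n. ereal (ln (K n eps) / real n))) \<longlongrightarrow> 0) (at_right 0))"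

end

theory Submission
  imports Defs
begin

text \<open>
By the weak Gibbs property a Bowen ball \<open>B\<^sub>n(x,\<epsilon>)\<close> has measure \<open>exp (G\<^sub>n x - n p)\<close> up to a
factor \<open>K\<^sub>n(\<epsilon>) = exp (o(n))\<close>, where \<open>p\<close> is the pressure of \<open>G\<close>, and an asymptotically
additive \<open>G'\<^sub>n\<close> varies only by \<open>o(n)\<close> across a Bowen ball of small radius. Covering \<open>M\<close> by an
optimal \<open>(n,\<epsilon>)\<close>-cover (upper bound) or by the balls of half radius around a maximal separated set
(lower bound) therefore shows that \<open>\<integral> exp G'\<^sub>n dP\<close> agrees, up to \<open>exp (o(n))\<close>, with \<open>exp (-n p)\<close>
times the minimal cover sum of \<open>exp (G\<^sub>n + G'\<^sub>n)\<close>. Concatenating covers makes the cover sums almost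
submultiplicative; this transfers to the integrals and shows, Fekete-style, that
\<open>(1/n) log \<integral> exp G'\<^sub>n dP\<close> converges, and the comparison identifies the limit as
\<open>p(G + G') - p(G)\<close>.
\<close>

section \<open>Elementary limits\<close>

lemma tendsto_of_eventually_le_plus:
  fixes c :: "nat \<Rightarrow> real"
  assumes bounded: "eventually (\<lambda>n. \<bar>c n\<bar> \<le> C) sequentially"
    and almost_decreasing:
      "\<And>\<delta>. \<delta> > 0 \<Longrightarrow> \<exists>N. \<forall>m\<ge>N. eventually (\<lambda>n. c n \<le> c m + \<delta>) sequentially"
  obtains L where "c \<longlonglongrightarrow> L"
proof -
  define lsup where "lsup = limsup (\<lambda>n. ereal (c n))"
  have "lsup \<le> ereal C"
    unfolding lsup_def
    by (rule Limsup_bounded) (use bounded in \<open>auto elim!: eventually_mono simp: abs_le_iff\<close>)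
  moreover have "ereal (-C) \<le> lsup"
    unfolding lsup_def
    by (rule le_Limsup) (use bounded in \<open>auto elim!: eventually_mono simp: abs_le_iff\<close>)
  ultimately obtain L where L: "lsup = ereal L" by (cases lsup) auto
  have liminf: "ereal L \<le> liminf (\<lambda>n. ereal (c n))"
  proof (rule ereal_le_epsilon2)
    fix \<delta> :: real assume d: "0 < \<delta>"
    obtain N where N: "\<forall>m\<ge>N. eventually (\<lambda>n. c n \<le> c m + \<delta>) sequentially"
      using almost_decreasing[OF d] by blast
    have "ereal (L - \<delta>) \<le> ereal (c m)" if "m \<ge> N" for m
    proof -
      have "eventually (\<lambda>n. ereal (c n) \<le> ereal (c m + \<delta>)) sequentially"
        using N that by (auto elim: eventually_mono)
      then have "lsup \<le> ereal (c m + \<delta>)" unfolding lsup_def by (rule Limsup_bounded)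
      then show ?thesis using L by simp
    qed
    then have "ereal (L - \<delta>) \<le> liminf (\<lambda>n. ereal (c n))"
      by (intro Liminf_bounded) (auto simp: eventually_sequentially)
    then show "ereal L \<le> liminf (\<lambda>n. ereal (c n)) + ereal \<delta>"
      by (cases "liminf (\<lambda>n. ereal (c n))") auto
  qed
  have "(\<lambda>n. ereal (c n)) \<longlonglongrightarrow> ereal L"
  proof (rule Liminf_eq_Limsup)
    show "liminf (\<lambda>n. ereal (c n)) = ereal L"
      using liminf Liminf_le_Limsup[of sequentially "\<lambda>n. ereal (c n)"] L lsup_def by simp
  qed (use L lsup_def in auto)
  then have "c \<longlonglongrightarrow> L" by simp
  then show ?thesis by (rule that)
qed

lemma tendsto_ereal_of_eventually_near:
  fixes f :: "'b \<Rightarrow> ereal"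
  assumes near: "\<And>\<delta>. \<delta> > 0 \<Longrightarrow> eventually (\<lambda>x. ereal (a - \<delta>) \<le> f x \<and> f x \<le> ereal (a + \<delta>)) F"
  shows "(f \<longlongrightarrow> ereal a) F"
proof (rule order_tendstoI)
  fix b assume "ereal a < b"
  then obtain r where r: "ereal a < ereal r" "ereal r < b" using ereal_dense2 by blast
  have "(r - a) / 2 > 0" using r(1) by simp
  then show "eventually (\<lambda>x. f x < b) F"
  proof (rule eventually_mono[OF near])
    fix x assume "ereal (a - (r - a) / 2) \<le> f x \<and> f x \<le> ereal (a + (r - a) / 2)"
    then have "f x \<le> ereal (a + (r - a) / 2)" by simp
    also have "\<dots> < ereal r" using r(1) by (simp add: field_simps)
    finally show "f x < b" using r(2) by simp
  qed
next
  fix b assume "b < ereal a"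
  then obtain r where r: "b < ereal r" "ereal r < ereal a" using ereal_dense2 by blast
  have "(a - r) / 2 > 0" using r(2) by simp
  then show "eventually (\<lambda>x. b < f x) F"
  proof (rule eventually_mono[OF near])
    fix x assume x: "ereal (a - (a - r) / 2) \<le> f x \<and> f x \<le> ereal (a + (a - r) / 2)"
    have "ereal r < ereal (a - (a - r) / 2)" using r(2) by (simp add: field_simps)
    also have "\<dots> \<le> f x" using x by simp
    finally show "b < f x" using r(1) by simp
  qed
qed

lemma Lim_at_right_limsup_eq:
  fixes c :: "nat \<Rightarrow> real" and z :: "real \<Rightarrow> nat \<Rightarrow> real"
  assumes lim: "c \<longlonglongrightarrow> L"
    and close: "\<And>\<delta>. \<delta> > 0 \<Longrightarrow> \<exists>e0>0. \<forall>e. 0 < e \<and> e < e0 \<longrightarrow>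
        eventually (\<lambda>n. \<bar>c n + p - z e n\<bar> \<le> \<delta>) sequentially"
  shows "Lim (at_right 0) (\<lambda>e. limsup (\<lambda>n. ereal (z e n))) = ereal (L + p)"
proof -
  have "((\<lambda>e. limsup (\<lambda>n. ereal (z e n))) \<longlongrightarrow> ereal (L + p)) (at_right 0)"
  proof (rule tendsto_ereal_of_eventually_near)
    fix \<delta> :: real assume "\<delta> > 0"
    define \<eta> where "\<eta> = \<delta>/2"
    have \<eta>: "\<eta> > 0" "\<delta> = 2 * \<eta>" using \<open>\<delta> > 0\<close> by (simp_all add: \<eta>_def)
    obtain e0 where e0: "e0 > 0"
      "\<forall>e. 0 < e \<and> e < e0 \<longrightarrow> eventually (\<lambda>n. \<bar>c n + p - z e n\<bar> \<le> \<eta>) sequentially"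
      using close[OF \<eta>(1)] by blast
    have cL: "eventually (\<lambda>n. \<bar>c n - L\<bar> < \<eta>) sequentially"
      using lim \<eta>(1) unfolding tendsto_iff dist_real_def by blast
    have "eventually (\<lambda>e. 0 < e \<and> e < e0) (at_right 0)"
      using eventually_at_right_real[OF e0(1)] by (rule eventually_mono) simp
    then show "eventually (\<lambda>e. ereal (L + p - \<delta>) \<le> limsup (\<lambda>n. ereal (z e n))
        \<and> limsup (\<lambda>n. ereal (z e n)) \<le> ereal (L + p + \<delta>)) (at_right 0)"
    proof (rule eventually_mono)
      fix e assume "0 < e \<and> e < e0"
      then have ev: "eventually (\<lambda>n. \<bar>c n + p - z e n\<bar> \<le> \<eta> \<and> \<bar>c n - L\<bar> < \<eta>) sequentially"
        using e0 cL eventually_conj by blast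
      have "limsup (\<lambda>n. ereal (z e n)) \<le> ereal (L + p + 2 * \<eta>)"
        by (rule Limsup_bounded) (use ev in \<open>auto elim!: eventually_mono\<close>)
      moreover have "ereal (L + p - 2 * \<eta>) \<le> limsup (\<lambda>n. ereal (z e n))"
        by (rule le_Limsup) (use ev in \<open>auto elim!: eventually_mono\<close>)
      ultimately show "ereal (L + p - \<delta>) \<le> limsup (\<lambda>n. ereal (z e n))
          \<and> limsup (\<lambda>n. ereal (z e n)) \<le> ereal (L + p + \<delta>)" using \<eta>(2) by simp
    qed
  qed
  then show ?thesis by (rule tendsto_Lim[rotated]) simp
qed

lemma ratio_le_of_block_bound:
  fixes An Am q m n d C k :: real
  assumes block: "An \<le> q*Am + k*(q*(m*d)) + m*C + 2*(n*d)"
    and qm: "q*m \<le> n" "n < q*m + m"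
    and pos: "m > 0" "d > 0" "n > 0" "q \<ge> 0" "k \<ge> 0"
    and large: "m*(\<bar>Am/m\<bar> + \<bar>C\<bar>) \<le> n*d"
  shows "An/n \<le> Am/m + (k + 3)*d"
proof -
  define a where "a = Am/m"
  have 1: "q*Am = (q*m)*a" unfolding a_def using pos by simp
  have "\<bar>(q*m - n)*a\<bar> = \<bar>q*m - n\<bar> * \<bar>a\<bar>" by (rule abs_mult)
  also have "\<dots> \<le> m * \<bar>a\<bar>" using qm by (intro mult_right_mono) auto
  finally have 2: "(q*m)*a \<le> n*a + m*\<bar>a\<bar>" by (simp add: algebra_simps abs_le_iff)
  have 3: "k*(q*(m*d)) \<le> k*(n*d)"
    using qm pos by (intro mult_left_mono) (simp_all add: mult.assoc[symmetric])
  have 4: "m*C \<le> m*\<bar>C\<bar>" using pos by (intro mult_left_mono) auto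
  have 5: "m*\<bar>a\<bar> + m*\<bar>C\<bar> \<le> n*d" using large unfolding a_def by (simp add: algebra_simps)
  have "(k + 3)*(n*d) = k*(n*d) + 3*(n*d)" by (simp add: algebra_simps)
  then have "An \<le> n*a + (k + 3)*(n*d)" using block 1 2 3 4 5 by linarith
  then have "An \<le> (a + (k + 3)*d) * n" by (simp add: algebra_simps)
  then show ?thesis unfolding a_def[symmetric] using pos by (simp add: pos_divide_le_eq)
qed

section \<open>Birkhoff sums, Bowen balls and cover sums\<close>

lemma birkhoff_sum_add:
  "birkhoff_sum phi h (n + m) x = birkhoff_sum phi h n x + birkhoff_sum phi h m ((phi ^^ n) x)"
proof -
  have "birkhoff_sum phi h (n + m) x = (\<Sum>k<n. h ((phi ^^ k) x)) + (\<Sum>k<m. h ((phi ^^ (n + k)) x))"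
    unfolding birkhoff_sum_def by (induction m) simp_all
  also have "(\<Sum>k<m. h ((phi ^^ (n + k)) x)) = birkhoff_sum phi h m ((phi ^^ n) x)"
    unfolding birkhoff_sum_def by (simp add: funpow_add add.commute)
  finally show ?thesis unfolding birkhoff_sum_def by simp
qed

lemma birkhoff_sum_blocks:
  "birkhoff_sum phi h (q * m) x = (\<Sum>i<q. birkhoff_sum phi h m ((phi ^^ (i * m)) x))"
proof (induction q)
  case 0
  then show ?case by (simp add: birkhoff_sum_def)
next
  case (Suc q)
  have "birkhoff_sum phi h (Suc q * m) x = birkhoff_sum phi h (q * m + m) x" by (simp add: add.commute)
  also have "\<dots> = birkhoff_sum phi h (q * m) x + birkhoff_sum phi h m ((phi ^^ (q * m)) x)"
    by (rule birkhoff_sum_add)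
  finally show ?case using Suc by simp
qed

lemma birkhoff_sum_plus:
  "birkhoff_sum phi (\<lambda>x. g x + h x) n x = birkhoff_sum phi g n x + birkhoff_sum phi h n x"
  unfolding birkhoff_sum_def by (simp add: sum.distrib)

lemma abs_birkhoff_sum_le:
  assumes "\<And>z. \<bar>g z\<bar> \<le> C"
  shows "\<bar>birkhoff_sum phi g n x\<bar> \<le> real n * C"
proof -
  have "\<bar>birkhoff_sum phi g n x\<bar> \<le> (\<Sum>k<n. \<bar>g ((phi ^^ k) x)\<bar>)"
    unfolding birkhoff_sum_def by (rule sum_abs)
  also have "\<dots> \<le> (\<Sum>k<n. C)" by (intro sum_mono assms)
  finally show ?thesis by simp
qed

lemma bowen_ball_center: "e > 0 \<Longrightarrow> x \<in> bowen_ball phi n x e"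
  by (simp add: bowen_ball_def)

lemma bowen_ball_commute: "y \<in> bowen_ball phi n x e \<longleftrightarrow> x \<in> bowen_ball phi n y e"
  by (simp add: bowen_ball_def dist_commute)

lemma bowen_ball_mono: "e \<le> e' \<Longrightarrow> bowen_ball phi n x e \<subseteq> bowen_ball phi n x e'"
  by (auto simp: bowen_ball_def)

lemma bowen_ball_triangle:
  assumes "y \<in> bowen_ball phi n x e" "z \<in> bowen_ball phi n x e'"
  shows "z \<in> bowen_ball phi n y (e + e')"
  unfolding bowen_ball_def
proof (intro CollectI allI impI)
  fix k assume k: "k < n"
  have "dist ((phi ^^ k) z) ((phi ^^ k) y)
      \<le> dist ((phi ^^ k) z) ((phi ^^ k) x) + dist ((phi ^^ k) y) ((phi ^^ k) x)"
    by (rule dist_triangle2)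
  also have "\<dots> < e' + e" using assms k by (intro add_strict_mono) (auto simp: bowen_ball_def)
  finally show "dist ((phi ^^ k) z) ((phi ^^ k) y) < e + e'" by simp
qed

lemma bounded_borelE:
  assumes "bounded_borel f"
  obtains B where "\<And>x. \<bar>f x\<bar> \<le> B"
proof -
  have "bounded (range f)" using assms by (simp add: bounded_borel_def)
  then obtain B where "\<forall>y\<in>range f. norm y \<le> B" unfolding bounded_iff by blast
  then show ?thesis using that by auto
qed

definition birkhoff_approximable :: "('a::metric_space \<Rightarrow> 'a) \<Rightarrow> (nat \<Rightarrow> 'a \<Rightarrow> real) \<Rightarrow> bool" where
  "birkhoff_approximable phi Hs \<longleftrightarrow> (\<forall>\<delta>>0. \<exists>h N. continuous_on UNIV h \<and>
     (\<forall>n\<ge>N. \<forall>x. \<bar>Hs n x - birkhoff_sum phi h n x\<bar> \<le> real n * \<delta>))"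

lemma birkhoff_approximable_add:
  assumes "birkhoff_approximable phi G" "birkhoff_approximable phi F"
  shows "birkhoff_approximable phi (\<lambda>n x. G n x + F n x)"
  unfolding birkhoff_approximable_def
proof (intro allI impI)
  fix \<delta> :: real assume "\<delta> > 0"
  then have d2: "\<delta>/2 > 0" by simp
  obtain g N1 where g: "continuous_on UNIV g"
    and approx_G: "\<forall>n\<ge>N1. \<forall>x. \<bar>G n x - birkhoff_sum phi g n x\<bar> \<le> real n * (\<delta>/2)"
    using assms(1) d2 unfolding birkhoff_approximable_def by blast
  obtain f N2 where f: "continuous_on UNIV f"
    and approx_F: "\<forall>n\<ge>N2. \<forall>x. \<bar>F n x - birkhoff_sum phi f n x\<bar> \<le> real n * (\<delta>/2)"
    using assms(2) d2 unfolding birkhoff_approximable_def by blast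
  have "\<bar>G n x + F n x - birkhoff_sum phi (\<lambda>x. g x + f x) n x\<bar> \<le> real n * \<delta>"
    if "n \<ge> max N1 N2" for n x
  proof -
    have "\<bar>G n x + F n x - birkhoff_sum phi (\<lambda>x. g x + f x) n x\<bar>
        = \<bar>(G n x - birkhoff_sum phi g n x) + (F n x - birkhoff_sum phi f n x)\<bar>"
      unfolding birkhoff_sum_plus by (simp add: algebra_simps)
    also have "\<dots> \<le> real n * (\<delta>/2) + real n * (\<delta>/2)"
      using approx_G approx_F that by (intro order.trans[OF abs_triangle_ineq] add_mono) auto
    finally show ?thesis by (simp add: field_simps)
  qed
  moreover have "continuous_on UNIV (\<lambda>x. g x + f x)" using g f by (intro continuous_on_add)
  ultimately show "\<exists>h N. continuous_on UNIV h \<and>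
      (\<forall>n\<ge>N. \<forall>x. \<bar>G n x + F n x - birkhoff_sum phi h n x\<bar> \<le> real n * \<delta>)"
    by blast
qed

definition cover_sum :: "('a::metric_space \<Rightarrow> 'a) \<Rightarrow> (nat \<Rightarrow> 'a \<Rightarrow> real) \<Rightarrow> nat \<Rightarrow> real \<Rightarrow> real" where
  "cover_sum phi Hs n e = Inf {\<Sum>x\<in>E. exp (Hs n x) | E. E \<in> bowen_covers phi n e}"

lemma pressure_cover_sum:
  "pressure phi Hs = Lim (at_right 0) (\<lambda>e. limsup (\<lambda>n. ereal (ln (cover_sum phi Hs n e) / real n)))"
  by (simp add: pressure_def cover_sum_def)

lemma cover_sum_le:
  assumes "E \<in> bowen_covers phi n e"
  shows "cover_sum phi Hs n e \<le> (\<Sum>x\<in>E. exp (Hs n x))"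
  unfolding cover_sum_def
proof (rule cInf_lower)
  show "(\<Sum>x\<in>E. exp (Hs n x)) \<in> {\<Sum>x\<in>E. exp (Hs n x) | E. E \<in> bowen_covers phi n e}"
    using assms by blast
  show "bdd_below {\<Sum>x\<in>E. exp (Hs n x) | E. E \<in> bowen_covers phi n e}"
    by (rule bdd_belowI[where m=0]) (auto intro: sum_nonneg)
qed

lemma bowen_ball_of_blocks:
  assumes y: "\<And>i. i < q \<Longrightarrow> (phi ^^ (i * m)) y \<in> bowen_ball phi m (a i) c"
    and z: "\<And>i. i < q \<Longrightarrow> (phi ^^ (i * m)) z \<in> bowen_ball phi m (a i) c"
  shows "z \<in> bowen_ball phi (q * m) y (2 * c)"
  unfolding bowen_ball_def
proof (intro CollectI allI impI)
  fix k assume k: "k < q * m"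
  define i where "i = k div m"
  define j where "j = k mod m"
  have "m > 0" using k by (cases "m = 0") auto
  then have iq: "i < q" and jm: "j < m"
    unfolding i_def j_def using k by (simp_all add: less_mult_imp_div_less)
  have eq: "(phi ^^ k) x = (phi ^^ j) ((phi ^^ (i * m)) x)" for x
    using funpow_add[of j "i * m" phi] by (simp add: i_def j_def)
  have "dist ((phi ^^ k) z) ((phi ^^ k) y)
      \<le> dist ((phi ^^ k) z) ((phi ^^ j) (a i)) + dist ((phi ^^ k) y) ((phi ^^ j) (a i))"
    by (rule dist_triangle2)
  also have "\<dots> < c + c"
    using y[OF iq] z[OF iq] jm unfolding eq bowen_ball_def by (intro add_strict_mono) blast+
  finally show "dist ((phi ^^ k) z) ((phi ^^ k) y) < 2 * c" by simp
qed

lemma le_sum_blocks_of_birkhoff_approx: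
  assumes approx: "\<And>n x. n \<ge> N \<Longrightarrow> \<bar>Hs n x - birkhoff_sum phi h n x\<bar> \<le> real n * \<delta>"
    and var: "\<And>x y. y \<in> bowen_ball phi m x c \<Longrightarrow>
       \<bar>birkhoff_sum phi h m y - birkhoff_sum phi h m x\<bar> \<le> real m * \<delta>"
    and m: "m \<ge> N" and q: "q \<ge> 1"
    and orbit: "\<And>i. i < q \<Longrightarrow> (phi ^^ (i * m)) y \<in> bowen_ball phi m (a i) c"
  shows "Hs (q * m) y \<le> 3 * real q * real m * \<delta> + (\<Sum>i<q. Hs m (a i))"
proof -
  have qm: "q * m \<ge> N" using m q by (metis le_trans mult_le_mono1 mult_1)
  have "Hs (q * m) y \<le> birkhoff_sum phi h (q * m) y + real (q * m) * \<delta>"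
    using approx[OF qm, of y] by linarith
  also have "birkhoff_sum phi h (q * m) y = (\<Sum>i<q. birkhoff_sum phi h m ((phi ^^ (i * m)) y))"
    by (rule birkhoff_sum_blocks)
  also have "\<dots> \<le> (\<Sum>i<q. Hs m (a i) + 2 * real m * \<delta>)"
  proof (rule sum_mono)
    fix i assume "i \<in> {..<q}"
    then have "\<bar>birkhoff_sum phi h m ((phi ^^ (i * m)) y) - birkhoff_sum phi h m (a i)\<bar> \<le> real m * \<delta>"
      using orbit var by simp
    moreover have "\<bar>Hs m (a i) - birkhoff_sum phi h m (a i)\<bar> \<le> real m * \<delta>" by (rule approx[OF m])
    ultimately show "birkhoff_sum phi h m ((phi ^^ (i * m)) y) \<le> Hs m (a i) + 2 * real m * \<delta>"
      by linarith
  qed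
  also have "\<dots> = (\<Sum>i<q. Hs m (a i)) + 2 * real q * real m * \<delta>" by (simp add: sum.distrib)
  finally show ?thesis by (simp add: algebra_simps)
qed

lemma concatenated_bowen_cover:
  assumes E: "E \<in> bowen_covers phi m c"
  obtains T w where "T \<subseteq> PiE {..<q} (\<lambda>_. E)" "w ` T \<in> bowen_covers phi (q * m) (2 * c)"
    "\<And>s i. s \<in> T \<Longrightarrow> i < q \<Longrightarrow> (phi ^^ (i * m)) (w s) \<in> bowen_ball phi m (s i) c"
proof -
  have finE: "finite E" and covE: "(\<Union>x\<in>E. bowen_ball phi m x c) = UNIV"
    using E by (auto simp: bowen_covers_def)
  define I where "I s = {z. \<forall>i<q. (phi ^^ (i * m)) z \<in> bowen_ball phi m (s i) c}" for s :: "nat \<Rightarrow> 'a"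
  define T where "T = {s \<in> PiE {..<q} (\<lambda>_. E). I s \<noteq> {}}"
  define w where "w s = (SOME z. z \<in> I s)" for s
  have wI: "w s \<in> I s" if "s \<in> T" for s
  proof -
    have "\<exists>z. z \<in> I s" using that unfolding T_def by blast
    then show ?thesis unfolding w_def by (rule someI_ex)
  qed
  have finT: "finite T"
    by (rule finite_subset[of _ "PiE {..<q} (\<lambda>_. E)"]) (auto simp: T_def finite_PiE finE)
  have "z \<in> (\<Union>s\<in>T. bowen_ball phi (q * m) (w s) (2 * c))" for z
  proof -
    define ch where "ch i = (SOME x. x \<in> E \<and> (phi ^^ (i * m)) z \<in> bowen_ball phi m x c)" for i
    have ch: "ch i \<in> E \<and> (phi ^^ (i * m)) z \<in> bowen_ball phi m (ch i) c" for i
    proof -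
      have "\<exists>x. x \<in> E \<and> (phi ^^ (i * m)) z \<in> bowen_ball phi m x c" using covE by blast
      then show ?thesis unfolding ch_def by (rule someI_ex)
    qed
    define s where "s = restrict ch {..<q}"
    have zI: "z \<in> I s" unfolding I_def s_def using ch by auto
    have sT: "s \<in> T" unfolding T_def s_def using ch zI[unfolded s_def] by auto
    have wsI: "w s \<in> I s" by (rule wI[OF sT])
    have "z \<in> bowen_ball phi (q * m) (w s) (2 * c)"
      by (rule bowen_ball_of_blocks[where a=s]) (use wsI zI in \<open>auto simp: I_def\<close>)
    then show ?thesis using sT by blast
  qed
  then have "w ` T \<in> bowen_covers phi (q * m) (2 * c)"
    using finT unfolding bowen_covers_def by auto
  moreover have "T \<subseteq> PiE {..<q} (\<lambda>_. E)" unfolding T_def by blast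
  ultimately show ?thesis using that wI unfolding I_def by blast
qed

lemma cover_sum_concatenate:
  assumes approx: "\<And>n x. n \<ge> N \<Longrightarrow> \<bar>Hs n x - birkhoff_sum phi h n x\<bar> \<le> real n * \<delta>"
    and var: "\<And>x y. y \<in> bowen_ball phi m x c \<Longrightarrow>
       \<bar>birkhoff_sum phi h m y - birkhoff_sum phi h m x\<bar> \<le> real m * \<delta>"
    and m: "m \<ge> N" and q: "q \<ge> 1" and E: "E \<in> bowen_covers phi m c"
  shows "cover_sum phi Hs (q * m) (2 * c) \<le> exp (3 * real q * real m * \<delta>) * (\<Sum>x\<in>E. exp (Hs m x)) ^ q"
proof -
  have finE: "finite E" using E by (simp add: bowen_covers_def)
  obtain T w where T: "T \<subseteq> PiE {..<q} (\<lambda>_. E)" and cov: "w ` T \<in> bowen_covers phi (q * m) (2 * c)"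
    and orbit: "\<And>s i. s \<in> T \<Longrightarrow> i < q \<Longrightarrow> (phi ^^ (i * m)) (w s) \<in> bowen_ball phi m (s i) c"
    using concatenated_bowen_cover[OF E] by blast
  have finPiE: "finite (PiE {..<q} (\<lambda>_. E))" by (simp add: finite_PiE finE)
  have finT: "finite T" using T finPiE by (rule finite_subset)
  let ?c = "exp (3 * real q * real m * \<delta>)"
  have summand: "exp (Hs (q * m) (w s)) \<le> ?c * (\<Prod>i<q. exp (Hs m (s i)))" if sT: "s \<in> T" for s
  proof -
    have "Hs (q * m) (w s) \<le> 3 * real q * real m * \<delta> + (\<Sum>i<q. Hs m (s i))"
      by (rule le_sum_blocks_of_birkhoff_approx[OF approx var m q orbit[OF sT]])
    then have "exp (Hs (q * m) (w s)) \<le> exp (3 * real q * real m * \<delta> + (\<Sum>i<q. Hs m (s i)))"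
      by simp
    also have "\<dots> = ?c * (\<Prod>i<q. exp (Hs m (s i)))" by (simp add: exp_add exp_sum)
    finally show ?thesis .
  qed
  have "cover_sum phi Hs (q * m) (2 * c) \<le> (\<Sum>x\<in>w ` T. exp (Hs (q * m) x))" by (rule cover_sum_le[OF cov])
  also have "\<dots> \<le> (\<Sum>s\<in>T. exp (Hs (q * m) (w s)))"
    using sum_image_le[OF finT, of "\<lambda>x. exp (Hs (q * m) x)" w] by (simp add: o_def)
  also have "\<dots> \<le> (\<Sum>s\<in>T. ?c * (\<Prod>i<q. exp (Hs m (s i))))" by (rule sum_mono[OF summand])
  also have "\<dots> \<le> (\<Sum>s\<in>PiE {..<q} (\<lambda>_. E). ?c * (\<Prod>i<q. exp (Hs m (s i))))"
    by (rule sum_mono2[OF finPiE T]) (intro mult_nonneg_nonneg prod_nonneg; simp)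
  also have "\<dots> = ?c * (\<Prod>i<q. \<Sum>x\<in>E. exp (Hs m x))"
    using prod_sum_PiE[of "{..<q}" "\<lambda>_. E" "\<lambda>i x. exp (Hs m x)"] finE by (simp add: sum_distrib_left)
  also have "\<dots> = ?c * (\<Sum>x\<in>E. exp (Hs m x)) ^ q" by simp
  finally show ?thesis .
qed

section \<open>Compact dynamical systems\<close>

locale compact_dynamics =
  fixes phi :: "'a::metric_space \<Rightarrow> 'a"
  assumes compact_space: "compact (UNIV :: 'a set)"
    and continuous_phi: "continuous_on UNIV phi"
begin

lemma continuous_on_funpow: "continuous_on UNIV (phi ^^ k)"
proof (induction k)
  case 0
  then show ?case by (simp add: continuous_on_id)
next
  case (Suc k)
  have "phi ^^ Suc k = phi \<circ> (phi ^^ k)" by simp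
  then show ?case using continuous_on_compose[OF Suc] continuous_phi
    by (metis continuous_on_subset top_greatest)
qed

lemma open_bowen_ball: "open (bowen_ball phi n x e)"
proof -
  have eq: "bowen_ball phi n x e = (\<Inter>k\<in>{..<n}. {y. dist ((phi ^^ k) y) ((phi ^^ k) x) < e})"
    unfolding bowen_ball_def by auto
  have "open {y. dist ((phi ^^ k) y) ((phi ^^ k) x) < e}" for k
    by (rule open_Collect_less) (intro continuous_intros continuous_on_funpow)+
  then show ?thesis unfolding eq by (intro open_INT) auto
qed

lemma finite_bowen_cover:
  assumes "e > 0"
  obtains E where "finite E" "(\<Union>x\<in>E. bowen_ball phi n x e) = UNIV"
proof -
  have cov: "UNIV \<subseteq> (\<Union>x\<in>UNIV. bowen_ball phi n x e)" using bowen_ball_center[OF assms] by blast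
  obtain E where "finite E" "UNIV \<subseteq> (\<Union>x\<in>E. bowen_ball phi n x e)"
    by (rule compactE_image[OF compact_space, of UNIV "\<lambda>x. bowen_ball phi n x e", OF open_bowen_ball cov])
  then show ?thesis using that by blast
qed

lemma bowen_covers_nonempty:
  assumes "e > 0"
  shows "bowen_covers phi n e \<noteq> {}"
proof -
  obtain E where "finite E" "(\<Union>x\<in>E. bowen_ball phi n x e) = UNIV"
    using finite_bowen_cover[OF assms] by blast
  then have "E \<in> bowen_covers phi n e" by (simp add: bowen_covers_def)
  then show ?thesis by blast
qed

lemma le_cover_sum:
  assumes "e > 0" "\<And>E. E \<in> bowen_covers phi n e \<Longrightarrow> t \<le> (\<Sum>x\<in>E. exp (Hs n x))"
  shows "t \<le> cover_sum phi Hs n e"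
  unfolding cover_sum_def
  by (rule cInf_greatest) (use assms bowen_covers_nonempty[OF assms(1), where n=n] in blast)+

definition bowen_separated :: "nat \<Rightarrow> real \<Rightarrow> 'a set \<Rightarrow> bool" where
  "bowen_separated n e F \<longleftrightarrow> finite F \<and> (\<forall>x\<in>F. \<forall>y\<in>F. x \<noteq> y \<longrightarrow> y \<notin> bowen_ball phi n x e)"

lemma card_bowen_separated_le:
  assumes "e > 0"
  obtains C where "\<And>F. bowen_separated n (2 * e) F \<Longrightarrow> card F \<le> C"
proof -
  obtain E where E: "finite E" "(\<Union>x\<in>E. bowen_ball phi n x e) = UNIV"
    using finite_bowen_cover[OF assms] by blast
  have "card F \<le> card E" if F: "bowen_separated n (2 * e) F" for F
  proof -
    define f where "f y = (SOME x. x \<in> E \<and> y \<in> bowen_ball phi n x e)" for y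
    have f: "f y \<in> E \<and> y \<in> bowen_ball phi n (f y) e" for y
    proof -
      have "\<exists>x. x \<in> E \<and> y \<in> bowen_ball phi n x e" using E(2) by blast
      then show ?thesis unfolding f_def by (rule someI_ex)
    qed
    have "inj_on f F"
    proof (rule inj_onI)
      fix x y assume xy: "x \<in> F" "y \<in> F" "f x = f y"
      have "x \<in> bowen_ball phi n (f x) e" "y \<in> bowen_ball phi n (f x) e" using f xy(3) by metis+
      then have "y \<in> bowen_ball phi n x (e + e)" by (rule bowen_ball_triangle)
      then show "x = y" using F xy unfolding bowen_separated_def by (metis mult_2)
    qed
    moreover have "f ` F \<subseteq> E" using f by blast
    ultimately show ?thesis using card_inj_on_le E(1) by blast
  qed
  then show ?thesis using that by blast
qed

text \<open>A maximal \<open>(n,2e)\<close>-separated set: its \<open>2e\<close>-balls cover by maximality, its \<open>e\<close>-balls are disjoint.\<close>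

lemma disjoint_bowen_cover:
  assumes "e > 0"
  obtains F where "finite F" "(\<Union>x\<in>F. bowen_ball phi n x (2 * e)) = UNIV"
    "disjoint_family_on (\<lambda>x. bowen_ball phi n x e) F"
proof -
  obtain C where C: "\<And>F. bowen_separated n (2 * e) F \<Longrightarrow> card F \<le> C"
    using card_bowen_separated_le[OF assms] by blast
  have empty: "bowen_separated n (2 * e) {}" by (simp add: bowen_separated_def)
  have "\<exists>F. bowen_separated n (2 * e) F \<and> (\<forall>F'. bowen_separated n (2 * e) F' \<longrightarrow> card F' \<le> card F)"
    by (rule Lattices_Big.ex_has_greatest_nat[where b="Suc C" and P="bowen_separated n (2 * e)" and f=card,
          OF empty]) (simp add: C le_imp_less_Suc)
  then obtain F where F: "bowen_separated n (2 * e) F"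
    and F_max: "\<And>F'. bowen_separated n (2 * e) F' \<Longrightarrow> card F' \<le> card F"
    by blast
  have fin: "finite F" using F by (simp add: bowen_separated_def)
  have "(\<Union>x\<in>F. bowen_ball phi n x (2 * e)) = UNIV"
  proof (rule ccontr)
    assume "(\<Union>x\<in>F. bowen_ball phi n x (2 * e)) \<noteq> UNIV"
    then obtain z where z: "\<And>x. x \<in> F \<Longrightarrow> z \<notin> bowen_ball phi n x (2 * e)" by blast
    then have "z \<notin> F" using bowen_ball_center[of "2 * e"] assms by force
    moreover have "bowen_separated n (2 * e) (insert z F)"
      using F z fin unfolding bowen_separated_def by (auto simp: bowen_ball_commute)
    ultimately show False using F_max[of "insert z F"] fin by simp
  qed
  moreover have "disjoint_family_on (\<lambda>x. bowen_ball phi n x e) F"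
    unfolding disjoint_family_on_def
  proof (intro ballI impI)
    fix x y assume "x \<in> F" "y \<in> F" "x \<noteq> y"
    show "bowen_ball phi n x e \<inter> bowen_ball phi n y e = {}"
    proof (rule ccontr)
      assume "bowen_ball phi n x e \<inter> bowen_ball phi n y e \<noteq> {}"
      then obtain v where "x \<in> bowen_ball phi n v e" "y \<in> bowen_ball phi n v e"
        by (auto simp: bowen_ball_commute)
      then have "y \<in> bowen_ball phi n x (e + e)" by (rule bowen_ball_triangle)
      then show False using F \<open>x \<in> F\<close> \<open>y \<in> F\<close> \<open>x \<noteq> y\<close> unfolding bowen_separated_def by (metis mult_2)
    qed
  qed
  ultimately show ?thesis using that fin by blast
qed

lemma continuous_bounded:
  fixes g :: "'a \<Rightarrow> real"
  assumes "continuous_on UNIV g"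
  obtains C where "\<And>x. \<bar>g x\<bar> \<le> C"
proof -
  have "bounded (range g)"
    by (rule compact_imp_bounded[OF compact_continuous_image[OF assms compact_space]])
  then obtain C where "\<forall>y\<in>range g. norm y \<le> C" unfolding bounded_iff by blast
  then show ?thesis using that by auto
qed

lemma birkhoff_sum_variation:
  assumes "continuous_on UNIV g" "\<eta> > 0"
  obtains d where "d > 0" "\<And>n x y e. e \<le> d \<Longrightarrow> y \<in> bowen_ball phi n x e \<Longrightarrow>
     \<bar>birkhoff_sum phi g n y - birkhoff_sum phi g n x\<bar> \<le> real n * \<eta>"
proof -
  have "uniformly_continuous_on UNIV g"
    by (rule compact_uniformly_continuous[OF assms(1) compact_space])
  then obtain d where "d > 0" "\<forall>x\<in>UNIV. \<forall>x'\<in>UNIV. dist x' x < d \<longrightarrow> dist (g x') (g x) < \<eta>"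
    unfolding uniformly_continuous_on_def using assms(2) by blast
  then have d: "d > 0" "\<And>a b. dist a b < d \<Longrightarrow> dist (g a) (g b) < \<eta>" by auto
  have "\<bar>birkhoff_sum phi g n y - birkhoff_sum phi g n x\<bar> \<le> real n * \<eta>"
    if "e \<le> d" "y \<in> bowen_ball phi n x e" for n x y e
  proof -
    have "\<bar>birkhoff_sum phi g n y - birkhoff_sum phi g n x\<bar>
        \<le> (\<Sum>k<n. \<bar>g ((phi ^^ k) y) - g ((phi ^^ k) x)\<bar>)"
      unfolding birkhoff_sum_def sum_subtractf[symmetric] by (rule sum_abs)
    also have "\<dots> \<le> (\<Sum>k<n. \<eta>)"
    proof (rule sum_mono)
      fix k assume "k \<in> {..<n}"
      then have "dist ((phi ^^ k) y) ((phi ^^ k) x) < d" using that unfolding bowen_ball_def by force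
      then have "dist (g ((phi ^^ k) y)) (g ((phi ^^ k) x)) < \<eta>" by (rule d(2))
      then show "\<bar>g ((phi ^^ k) y) - g ((phi ^^ k) x)\<bar> \<le> \<eta>" by (simp add: dist_real_def)
    qed
    finally show ?thesis by simp
  qed
  then show ?thesis using that d(1) by blast
qed

lemma class_A_imp_birkhoff_approximable:
  assumes A: "class_A phi Gs"
  shows "birkhoff_approximable phi Gs"
  unfolding birkhoff_approximable_def
proof (intro allI impI)
  fix \<delta> :: real assume d: "\<delta> > 0"
  obtain Gk where Gk: "\<And>k. continuous_on UNIV (Gk k)"
    and lim: "(\<lambda>k. limsup (\<lambda>n. ereal (sup_norm (\<lambda>x. Gs n x - birkhoff_sum phi (Gk k) n x) / real n)))
      \<longlonglongrightarrow> 0"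
    using A unfolding class_A_def by blast
  have "eventually (\<lambda>k. limsup (\<lambda>n. ereal (sup_norm (\<lambda>x. Gs n x - birkhoff_sum phi (Gk k) n x) / real n))
      < ereal \<delta>) sequentially"
    using order_tendstoD(2)[OF lim] d by simp
  then obtain k where k: "limsup (\<lambda>n. ereal (sup_norm (\<lambda>x. Gs n x - birkhoff_sum phi (Gk k) n x) / real n))
      < ereal \<delta>"
    by (auto simp: eventually_sequentially)
  obtain N where N: "\<And>n. n \<ge> N \<Longrightarrow> sup_norm (\<lambda>x. Gs n x - birkhoff_sum phi (Gk k) n x) / real n < \<delta>"
    using Limsup_lessD[OF k] by (auto simp: eventually_sequentially)
  obtain C where C: "\<And>x. \<bar>Gk k x\<bar> \<le> C" using continuous_bounded[OF Gk] by blast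
  have "\<bar>Gs n x - birkhoff_sum phi (Gk k) n x\<bar> \<le> real n * \<delta>" if n: "n \<ge> Suc N" for n x
  proof -
    obtain B where B: "\<And>x. \<bar>Gs n x\<bar> \<le> B"
      using A bounded_borelE unfolding class_A_def by blast
    have bd: "\<bar>Gs n y - birkhoff_sum phi (Gk k) n y\<bar> \<le> B + real n * C" for y
      using B[of y] abs_birkhoff_sum_le[where g="Gk k" and phi=phi and n=n and x=y, OF C] by linarith
    have "\<bar>Gs n x - birkhoff_sum phi (Gk k) n x\<bar> \<le> sup_norm (\<lambda>x. Gs n x - birkhoff_sum phi (Gk k) n x)"
      unfolding sup_norm_def by (rule cSUP_upper) (use bd in \<open>auto intro!: bdd_aboveI2\<close>)
    also have "\<dots> < real n * \<delta>" using N[of n] n by (simp add: field_simps)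
    finally show ?thesis by simp
  qed
  then show "\<exists>h N. continuous_on UNIV h \<and> (\<forall>n\<ge>N. \<forall>x. \<bar>Gs n x - birkhoff_sum phi h n x\<bar> \<le> real n * \<delta>)"
    using Gk by blast
qed

lemma birkhoff_approximable_boundedE:
  assumes "birkhoff_approximable phi F" "\<delta> > 0"
  obtains g C N where "\<And>z. \<bar>g z\<bar> \<le> C" "continuous_on UNIV g"
    "\<And>n x. n \<ge> N \<Longrightarrow> \<bar>F n x - birkhoff_sum phi g n x\<bar> \<le> real n * \<delta>"
proof -
  obtain g N where "continuous_on UNIV g" "\<And>n x. n \<ge> N \<Longrightarrow> \<bar>F n x - birkhoff_sum phi g n x\<bar> \<le> real n * \<delta>"
    using assms unfolding birkhoff_approximable_def by blast
  moreover obtain C where "\<And>z. \<bar>g z\<bar> \<le> C" using continuous_bounded[OF \<open>continuous_on UNIV g\<close>] by blast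
  ultimately show ?thesis using that by blast
qed

lemma birkhoff_approximable_tempered:
  assumes "birkhoff_approximable phi F" "\<delta> > 0"
  obtains N d where "d > 0"
    "\<And>n x y e. n \<ge> N \<Longrightarrow> e \<le> d \<Longrightarrow> y \<in> bowen_ball phi n x e \<Longrightarrow> \<bar>F n y - F n x\<bar> \<le> real n * \<delta>"
proof -
  have d3: "\<delta>/3 > 0" using assms(2) by simp
  obtain g C N where "\<And>z. \<bar>g z\<bar> \<le> C" and g: "continuous_on UNIV g"
    and approx: "\<And>n x. n \<ge> N \<Longrightarrow> \<bar>F n x - birkhoff_sum phi g n x\<bar> \<le> real n * (\<delta>/3)"
    by (rule birkhoff_approximable_boundedE[OF assms(1) d3]) blast
  obtain d where d: "d > 0" and var: "\<And>n x y e. e \<le> d \<Longrightarrow> y \<in> bowen_ball phi n x e \<Longrightarrow>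
     \<bar>birkhoff_sum phi g n y - birkhoff_sum phi g n x\<bar> \<le> real n * (\<delta>/3)"
    using birkhoff_sum_variation[OF g d3] by blast
  have "\<bar>F n y - F n x\<bar> \<le> real n * \<delta>" if "n \<ge> N" "e \<le> d" "y \<in> bowen_ball phi n x e" for n x y e
  proof -
    have "3 * (real n * (\<delta>/3)) = real n * \<delta>" by simp
    then show ?thesis using approx[OF that(1), of x] approx[OF that(1), of y] var[OF that(2,3)]
      unfolding abs_le_iff by linarith
  qed
  then show ?thesis using that d by blast
qed

lemma ln_cover_sum_concatenate:
  assumes approx: "\<And>n x. n \<ge> N \<Longrightarrow> \<bar>Hs n x - birkhoff_sum phi h n x\<bar> \<le> real n * \<delta>"
    and var: "\<And>x y. y \<in> bowen_ball phi m x c \<Longrightarrow>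
       \<bar>birkhoff_sum phi h m y - birkhoff_sum phi h m x\<bar> \<le> real m * \<delta>"
    and m: "m \<ge> N" and q: "q \<ge> 1" and c: "c > 0" and pos: "cover_sum phi Hs (q * m) (2 * c) > 0"
  shows "ln (cover_sum phi Hs (q * m) (2 * c))
    \<le> 3 * real q * real m * \<delta> + real q * ln (cover_sum phi Hs m c)"
proof -
  define a where "a = (ln (cover_sum phi Hs (q * m) (2 * c)) - 3 * real q * real m * \<delta>) / real q"
  have qpos: "real q > 0" using q by simp
  have "exp a \<le> cover_sum phi Hs m c"
  proof (rule le_cover_sum[OF c])
    fix E assume E: "E \<in> bowen_covers phi m c"
    have Epos: "(\<Sum>x\<in>E. exp (Hs m x)) > 0"
      using E by (intro sum_pos) (auto simp: bowen_covers_def)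
    have "ln (cover_sum phi Hs (q * m) (2 * c)) \<le> ln (exp (3 * real q * real m * \<delta>) * (\<Sum>x\<in>E. exp (Hs m x)) ^ q)"
      using cover_sum_concatenate[OF approx var m q E] pos Epos by simp
    also have "\<dots> = 3 * real q * real m * \<delta> + real q * ln (\<Sum>x\<in>E. exp (Hs m x))"
      using Epos by (simp add: ln_mult ln_realpow)
    finally have "a \<le> ln (\<Sum>x\<in>E. exp (Hs m x))"
      unfolding a_def using qpos by (simp add: divide_le_eq mult.commute)
    then show "exp a \<le> (\<Sum>x\<in>E. exp (Hs m x))" using Epos by (metis exp_le_cancel_iff exp_ln)
  qed
  then have "a \<le> ln (cover_sum phi Hs m c)" by (metis exp_gt_zero exp_le_cancel_iff exp_ln less_le_trans)
  then show ?thesis unfolding a_def using qpos by (simp add: divide_le_eq mult.commute)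
qed

end

section \<open>Weak Gibbs measures\<close>

lemma integral_exp_bounds:
  fixes f :: "'a::metric_space \<Rightarrow> real"
  assumes P: "borel_prob P" and f: "bounded_borel f" and B: "\<And>x. \<bar>f x\<bar> \<le> B"
  shows "integrable P (\<lambda>x. exp (f x))" "exp (-B) \<le> (\<integral>x. exp (f x) \<partial>P)" "(\<integral>x. exp (f x) \<partial>P) \<le> exp B"
proof -
  interpret prob_space P using P by (simp add: borel_prob_def)
  have sets_P: "sets P = sets borel" using P by (simp add: borel_prob_def)
  have "f \<in> borel_measurable borel" using f by (simp add: bounded_borel_def)
  then have "f \<in> borel_measurable P" using measurable_cong_sets[OF sets_P refl, of borel] by blast
  moreover have "AE x in P. norm (exp (f x)) \<le> exp B" using B by (auto simp: abs_le_iff)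
  ultimately show int: "integrable P (\<lambda>x. exp (f x))" by (intro integrable_const_bound[where B="exp B"]) auto
  have lo: "-B \<le> f x" and hi: "f x \<le> B" for x using B[of x] by (auto simp: abs_le_iff)
  have "(\<integral>x. exp (-B) \<partial>P) \<le> (\<integral>x. exp (f x) \<partial>P)"
    by (intro integral_mono int) (simp_all add: lo)
  then show "exp (-B) \<le> (\<integral>x. exp (f x) \<partial>P)" by (simp add: prob_space)
  have "(\<integral>x. exp (f x) \<partial>P) \<le> (\<integral>x. exp B \<partial>P)"
    by (intro integral_mono int) (simp_all add: hi)
  then show "(\<integral>x. exp (f x) \<partial>P) \<le> exp B" by (simp add: prob_space)
qed

lemma integral_exp_pos:
  assumes "borel_prob P" "bounded_borel f"
  shows "0 < (\<integral>x. exp (f x) \<partial>P)"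
proof -
  obtain B where "\<And>x. \<bar>f x\<bar> \<le> B" using bounded_borelE[OF assms(2)] by blast
  then have "exp (-B) \<le> (\<integral>x. exp (f x) \<partial>P)" by (rule integral_exp_bounds(2)[OF assms])
  then show ?thesis using exp_gt_zero[of "-B"] by linarith
qed

lemma abs_ln_integral_exp_le:
  assumes "borel_prob P" "bounded_borel f" "\<And>x. \<bar>f x\<bar> \<le> B"
  shows "\<bar>ln (\<integral>x. exp (f x) \<partial>P)\<bar> \<le> B"
proof -
  have "-B \<le> ln (\<integral>x. exp (f x) \<partial>P)"
    using ln_mono[OF integral_exp_bounds(2)[OF assms]] by simp
  moreover have "ln (\<integral>x. exp (f x) \<partial>P) \<le> B"
    using ln_mono[OF integral_exp_bounds(3)[OF assms] integral_exp_pos[OF assms(1,2)]] by simp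
  ultimately show ?thesis by (simp add: abs_le_iff)
qed

lemma ln_integral_exp_le_shift:
  assumes P: "borel_prob P" and f: "bounded_borel f" and g: "bounded_borel g"
    and le: "\<And>x. f x \<le> g x + k"
  shows "ln (\<integral>x. exp (f x) \<partial>P) \<le> k + ln (\<integral>x. exp (g x) \<partial>P)"
proof -
  obtain Bf where "\<And>x. \<bar>f x\<bar> \<le> Bf" using bounded_borelE[OF f] by blast
  note int_f = integral_exp_bounds(1)[OF P f this]
  obtain Bg where "\<And>x. \<bar>g x\<bar> \<le> Bg" using bounded_borelE[OF g] by blast
  note int_g = integral_exp_bounds(1)[OF P g this]
  have "(\<integral>x. exp (f x) \<partial>P) \<le> (\<integral>x. exp k * exp (g x) \<partial>P)"
    using le by (intro integral_mono int_f integrable_mult_right int_g) (simp add: exp_add[symmetric] add.commute)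
  also have "\<dots> = exp k * (\<integral>x. exp (g x) \<partial>P)" by simp
  finally have "ln (\<integral>x. exp (f x) \<partial>P) \<le> ln (exp k * (\<integral>x. exp (g x) \<partial>P))"
    using integral_exp_pos[OF P f] by (rule ln_mono)
  then show ?thesis using integral_exp_pos[OF P g] by (simp add: ln_mult)
qed

lemma sum_indicator_le_of_disjoint:
  fixes a :: "'b \<Rightarrow> real"
  assumes "finite S" "disjoint_family_on B S" "\<And>x. x \<in> S \<Longrightarrow> y \<in> B x \<Longrightarrow> a x \<le> f" "0 \<le> f"
  shows "(\<Sum>x\<in>S. a x * indicator (B x) y) \<le> f"
proof (cases "\<exists>x\<in>S. y \<in> B x")
  case True
  then obtain x0 where x0: "x0 \<in> S" "y \<in> B x0" by blast
  have "(\<Sum>x\<in>S. a x * indicator (B x) y)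
      = a x0 * indicator (B x0) y + (\<Sum>x\<in>S - {x0}. a x * indicator (B x) y)"
    by (rule sum.remove[OF assms(1) x0(1)])
  also have "(\<Sum>x\<in>S - {x0}. a x * indicator (B x) y) = 0"
  proof (intro sum.neutral ballI)
    fix x assume "x \<in> S - {x0}"
    then have "y \<notin> B x" using assms(2) x0 unfolding disjoint_family_on_def by blast
    then show "a x * indicator (B x) y = 0" by simp
  qed
  finally show ?thesis using assms(3)[OF x0] x0(2) by simp
next
  case False
  then have "(\<Sum>x\<in>S. a x * indicator (B x) y) = 0" by (intro sum.neutral) auto
  then show ?thesis using assms(4) by simp
qed

locale weak_gibbs_setting = compact_dynamics +
  fixes P :: "'a measure" and G F :: "nat \<Rightarrow> 'a \<Rightarrow> real" and p :: real
    and K :: "nat \<Rightarrow> real \<Rightarrow> real"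
  assumes borel_prob: "borel_prob P"
    and K_ge_1: "\<And>n e. n \<ge> 1 \<Longrightarrow> e > 0 \<Longrightarrow> K n e \<ge> 1"
    and measure_bowen_ball_ge: "\<And>n e x. n \<ge> 1 \<Longrightarrow> e > 0 \<Longrightarrow>
      exp (G n x - real n * p) / K n e \<le> measure P (bowen_ball phi n x e)"
    and measure_bowen_ball_le: "\<And>n e x. n \<ge> 1 \<Longrightarrow> e > 0 \<Longrightarrow>
      measure P (bowen_ball phi n x e) \<le> K n e * exp (G n x - real n * p)"
    and K_limit: "((\<lambda>e. limsup (\<lambda>n. ereal (ln (K n e) / real n))) \<longlongrightarrow> 0) (at_right 0)"
    and bounded_F: "\<And>n. bounded_borel (F n)"
    and approx_F: "birkhoff_approximable phi F"
    and approx_GF: "birkhoff_approximable phi (\<lambda>n x. G n x + F n x)"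
begin

abbreviation Z :: "nat \<Rightarrow> real \<Rightarrow> real" where
  "Z \<equiv> cover_sum phi (\<lambda>n x. G n x + F n x)"

lemma K_pos: "n \<ge> 1 \<Longrightarrow> e > 0 \<Longrightarrow> K n e > 0"
  using K_ge_1[of n e] by simp

lemma integrable_exp_F: "integrable P (\<lambda>y. exp (F n y))"
proof -
  obtain B where "\<And>x. \<bar>F n x\<bar> \<le> B" using bounded_borelE[OF bounded_F] by blast
  then show ?thesis by (rule integral_exp_bounds(1)[OF borel_prob bounded_F])
qed

lemma integral_exp_F_pos: "0 < (\<integral>y. exp (F n y) \<partial>P)"
  by (rule integral_exp_pos[OF borel_prob bounded_F])

lemma space_P: "space P = UNIV"
  using sets_eq_imp_space_eq[of P borel] borel_prob by (simp add: borel_prob_def)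

lemma integrable_indicator_bowen_ball: "integrable P (indicator (bowen_ball phi n x e) :: 'a \<Rightarrow> real)"
proof -
  interpret prob_space P using borel_prob by (simp add: borel_prob_def)
  have "bowen_ball phi n x e \<in> sets P" using open_bowen_ball borel_prob by (simp add: borel_prob_def)
  then show ?thesis by (simp add: integrable_indicator_iff space_P less_top[symmetric])
qed

lemma integrable_mult_indicator_bowen_ball:
  "integrable P (\<lambda>y. c * indicator (bowen_ball phi n x e) y :: real)"
  using integrable_indicator_bowen_ball by simp

lemma integral_sum_indicator_bowen_ball:
  "(\<integral>y. (\<Sum>x\<in>E. a x * indicator (bowen_ball phi n x e) y) \<partial>P)
    = (\<Sum>x\<in>E. a x * measure P (bowen_ball phi n x e))"
proof -
  have "(\<integral>y. (\<Sum>x\<in>E. a x * indicator (bowen_ball phi n x e) y) \<partial>P)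
      = (\<Sum>x\<in>E. (\<integral>y. a x * indicator (bowen_ball phi n x e) y \<partial>P))"
    by (rule Bochner_Integration.integral_sum) (rule integrable_mult_indicator_bowen_ball)
  also have "\<dots> = (\<Sum>x\<in>E. a x * measure P (bowen_ball phi n x e))"
    using integrable_indicator_bowen_ball by (simp add: space_P)
  finally show ?thesis .
qed

lemma integral_exp_le_sum_over_cover:
  assumes n: "n \<ge> 1" and e: "e > 0" and E: "E \<in> bowen_covers phi n e"
    and var: "\<And>x y. y \<in> bowen_ball phi n x e \<Longrightarrow> F n y \<le> F n x + V"
  shows "(\<integral>y. exp (F n y) \<partial>P) \<le> K n e * exp (V - real n * p) * (\<Sum>x\<in>E. exp (G n x + F n x))"
proof -
  have fin: "finite E" and cov: "(\<Union>x\<in>E. bowen_ball phi n x e) = UNIV"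
    using E by (auto simp: bowen_covers_def)
  let ?B = "\<lambda>x. bowen_ball phi n x e"
  have pt: "exp (F n y) \<le> (\<Sum>x\<in>E. exp (F n x + V) * indicator (?B x) y)" for y
  proof -
    obtain x where x: "x \<in> E" "y \<in> ?B x" using cov by blast
    have "exp (F n y) \<le> exp (F n x + V) * indicator (?B x) y" using var[OF x(2)] x(2) by simp
    also have "\<dots> \<le> (\<Sum>x\<in>E. exp (F n x + V) * indicator (?B x) y)"
      by (rule member_le_sum[OF x(1)]) (auto simp: fin)
    finally show ?thesis .
  qed
  have "(\<integral>y. exp (F n y) \<partial>P) \<le> (\<integral>y. (\<Sum>x\<in>E. exp (F n x + V) * indicator (?B x) y) \<partial>P)"
    by (rule integral_mono)
      (auto intro!: integrable_sum integrable_mult_indicator_bowen_ball integrable_exp_F pt)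
  also have "\<dots> = (\<Sum>x\<in>E. exp (F n x + V) * measure P (?B x))"
    by (rule integral_sum_indicator_bowen_ball)
  also have "\<dots> \<le> (\<Sum>x\<in>E. exp (F n x + V) * (K n e * exp (G n x - real n * p)))"
    by (intro sum_mono mult_left_mono measure_bowen_ball_le n e) auto
  also have "\<dots> = (\<Sum>x\<in>E. K n e * exp (V - real n * p) * exp (G n x + F n x))"
    by (intro sum.cong refl) (simp add: exp_add[symmetric] exp_diff mult_ac)
  also have "\<dots> = K n e * exp (V - real n * p) * (\<Sum>x\<in>E. exp (G n x + F n x))"
    by (simp add: sum_distrib_left)
  finally show ?thesis .
qed

lemma sum_over_separated_le_integral_exp:
  assumes n: "n \<ge> 1" and e: "e > 0" and S: "finite S"
    and disj: "disjoint_family_on (\<lambda>x. bowen_ball phi n x e) S"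
    and var: "\<And>x y. y \<in> bowen_ball phi n x e \<Longrightarrow> F n x - V \<le> F n y"
  shows "(\<Sum>x\<in>S. exp (G n x + F n x)) \<le> K n e * exp (V + real n * p) * (\<integral>y. exp (F n y) \<partial>P)"
proof -
  let ?B = "\<lambda>x. bowen_ball phi n x e"
  have Kpos: "K n e > 0" by (rule K_pos[OF n e])
  have pt: "(\<Sum>x\<in>S. exp (F n x - V) * indicator (?B x) y) \<le> exp (F n y)" for y
    by (rule sum_indicator_le_of_disjoint[OF S disj]) (use var in auto)
  have "(\<Sum>x\<in>S. exp (F n x - V) * measure P (?B x))
      = (\<integral>y. (\<Sum>x\<in>S. exp (F n x - V) * indicator (?B x) y) \<partial>P)"
    by (rule integral_sum_indicator_bowen_ball[symmetric])
  also have "\<dots> \<le> (\<integral>y. exp (F n y) \<partial>P)"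
    by (rule integral_mono)
      (auto intro!: integrable_sum integrable_mult_indicator_bowen_ball integrable_exp_F pt)
  finally have integral: "(\<Sum>x\<in>S. exp (F n x - V) * measure P (?B x)) \<le> (\<integral>y. exp (F n y) \<partial>P)" .
  have factor: "K n e * exp (V + real n * p) * (exp (F n x - V) * (exp (G n x - real n * p) / K n e))
      = exp (G n x + F n x)" for x
  proof -
    have "K n e * exp (V + real n * p) * (exp (F n x - V) * (exp (G n x - real n * p) / K n e))
        = exp (V + real n * p) * exp (F n x - V) * exp (G n x - real n * p)"
      using Kpos by simp
    also have "\<dots> = exp ((V + real n * p) + (F n x - V) + (G n x - real n * p))"
      by (simp only: exp_add)
    also have "(V + real n * p) + (F n x - V) + (G n x - real n * p) = G n x + F n x" by simp
    finally show ?thesis .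
  qed
  have "(\<Sum>x\<in>S. exp (G n x + F n x))
      = K n e * exp (V + real n * p) * (\<Sum>x\<in>S. exp (F n x - V) * (exp (G n x - real n * p) / K n e))"
    by (simp only: sum_distrib_left factor)
  also have "\<dots> \<le> K n e * exp (V + real n * p) * (\<Sum>x\<in>S. exp (F n x - V) * measure P (?B x))"
    using Kpos by (intro mult_left_mono sum_mono measure_bowen_ball_ge n e) auto
  also have "\<dots> \<le> K n e * exp (V + real n * p) * (\<integral>y. exp (F n y) \<partial>P)"
    using Kpos integral by (intro mult_left_mono) auto
  finally show ?thesis .
qed

lemma ln_integral_exp_le_ln_cover_sum:
  assumes n: "n \<ge> 1" and e: "e > 0"
    and var: "\<And>x y. y \<in> bowen_ball phi n x e \<Longrightarrow> \<bar>F n y - F n x\<bar> \<le> V"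
  shows "ln (\<integral>y. exp (F n y) \<partial>P) \<le> ln (K n e) + V - real n * p + ln (Z n e)" and "Z n e > 0"
proof -
  have Kpos: "K n e * exp (V - real n * p) > 0" using K_pos[OF n e] by simp
  have var': "F n y \<le> F n x + V" if "y \<in> bowen_ball phi n x e" for x y
    using var[OF that] unfolding abs_le_iff by linarith
  have "(\<integral>y. exp (F n y) \<partial>P) / (K n e * exp (V - real n * p)) \<le> Z n e"
  proof (rule le_cover_sum[OF e])
    fix E assume E: "E \<in> bowen_covers phi n e"
    show "(\<integral>y. exp (F n y) \<partial>P) / (K n e * exp (V - real n * p)) \<le> (\<Sum>x\<in>E. exp (G n x + F n x))"
      using integral_exp_le_sum_over_cover[OF n e E var'] Kpos by (simp add: divide_le_eq mult.commute)
  qed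
  then have le: "(\<integral>y. exp (F n y) \<partial>P) \<le> K n e * exp (V - real n * p) * Z n e"
    using Kpos by (simp add: divide_le_eq mult.commute)
  then have "0 < K n e * exp (V - real n * p) * Z n e" using integral_exp_F_pos[of n] by linarith
  then show Zpos: "Z n e > 0" using Kpos by (simp add: zero_less_mult_iff)
  have "ln (\<integral>y. exp (F n y) \<partial>P) \<le> ln (K n e * exp (V - real n * p) * Z n e)"
    using le integral_exp_F_pos by (rule ln_mono)
  also have "\<dots> = ln (K n e) + V - real n * p + ln (Z n e)"
    using K_pos[OF n e] Zpos by (simp add: ln_mult)
  finally show "ln (\<integral>y. exp (F n y) \<partial>P) \<le> ln (K n e) + V - real n * p + ln (Z n e)" .
qed

lemma ln_cover_sum_le_ln_integral_exp:
  assumes n: "n \<ge> 1" and e: "e > 0"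
    and var: "\<And>x y. y \<in> bowen_ball phi n x e \<Longrightarrow> \<bar>F n y - F n x\<bar> \<le> V"
  shows "ln (Z n e) \<le> ln (K n (e/2)) + V + real n * p + ln (\<integral>y. exp (F n y) \<partial>P)"
proof -
  have e2: "e/2 > 0" using e by simp
  obtain S where S: "finite S" "(\<Union>x\<in>S. bowen_ball phi n x (2 * (e/2))) = UNIV"
    and disj: "disjoint_family_on (\<lambda>x. bowen_ball phi n x (e/2)) S"
    using disjoint_bowen_cover[OF e2] by blast
  have var': "F n x - V \<le> F n y" if "y \<in> bowen_ball phi n x (e/2)" for x y
  proof -
    have "y \<in> bowen_ball phi n x e" using bowen_ball_mono[of "e/2" e phi n x] that e by auto
    from var[OF this] show ?thesis unfolding abs_le_iff by linarith
  qed
  have "S \<in> bowen_covers phi n e" using S by (simp add: bowen_covers_def)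
  then have "Z n e \<le> (\<Sum>x\<in>S. exp (G n x + F n x))" by (rule cover_sum_le)
  also have "\<dots> \<le> K n (e/2) * exp (V + real n * p) * (\<integral>y. exp (F n y) \<partial>P)"
    by (rule sum_over_separated_le_integral_exp[OF n e2 S(1) disj var'])
  finally have "ln (Z n e) \<le> ln (K n (e/2) * exp (V + real n * p) * (\<integral>y. exp (F n y) \<partial>P))"
    using ln_integral_exp_le_ln_cover_sum(2)[OF n e var] by (rule ln_mono)
  also have "\<dots> = ln (K n (e/2)) + V + real n * p + ln (\<integral>y. exp (F n y) \<partial>P)"
    using K_pos[OF n e2] integral_exp_F_pos[of n] by (simp add: ln_mult)
  finally show ?thesis .
qed

lemma eventually_ln_K_le:
  assumes "\<delta> > 0"
  obtains e1 where "e1 > 0" "\<And>e. 0 < e \<Longrightarrow> e < e1 \<Longrightarrow> \<exists>M. \<forall>n\<ge>M. ln (K n e) \<le> real n * \<delta>"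
proof -
  have "eventually (\<lambda>e. limsup (\<lambda>n. ereal (ln (K n e) / real n)) < ereal \<delta>) (at_right 0)"
    using order_tendstoD(2)[OF K_limit] assms by simp
  then obtain b where b: "b > 0"
    "\<And>e. e > 0 \<Longrightarrow> e < b \<Longrightarrow> limsup (\<lambda>n. ereal (ln (K n e) / real n)) < ereal \<delta>"
    unfolding eventually_at_right_field by auto
  have "\<exists>M. \<forall>n\<ge>M. ln (K n e) \<le> real n * \<delta>" if e: "0 < e" "e < b" for e
  proof -
    obtain M where M: "\<And>n. n \<ge> M \<Longrightarrow> ln (K n e) / real n < \<delta>"
      using Limsup_lessD[OF b(2)[OF e]] by (auto simp: eventually_sequentially)
    have "ln (K n e) \<le> real n * \<delta>" if "n \<ge> Suc M" for n
    proof -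
      have "ln (K n e) / real n < \<delta>" "real n > 0" using M that by auto
      then show ?thesis by (simp add: divide_less_eq mult.commute)
    qed
    then show ?thesis by blast
  qed
  then show ?thesis using that b(1) by blast
qed

lemma ln_integral_exp_near_ln_cover_sum:
  assumes n: "n \<ge> 1" and e: "e > 0"
    and var: "\<And>x y. y \<in> bowen_ball phi n x e \<Longrightarrow> \<bar>F n y - F n x\<bar> \<le> real n * \<eta>"
    and K: "ln (K n e) \<le> real n * \<eta>" "ln (K n (e/2)) \<le> real n * \<eta>"
  shows "\<bar>ln (\<integral>y. exp (F n y) \<partial>P) / real n + p - ln (Z n e) / real n\<bar> \<le> 2 * \<eta>"
proof -
  define X where "X = ln (\<integral>y. exp (F n y) \<partial>P) + real n * p - ln (Z n e)"
  have "X \<le> 2 * (real n * \<eta>)"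
    using ln_integral_exp_le_ln_cover_sum(1)[OF n e var] K(1) unfolding X_def by linarith
  moreover have "-X \<le> 2 * (real n * \<eta>)"
    using ln_cover_sum_le_ln_integral_exp[OF n e var] K(2) unfolding X_def by linarith
  ultimately have X: "\<bar>X\<bar> \<le> 2 * (real n * \<eta>)" by (simp add: abs_le_iff)
  have np: "real n > 0" using n by simp
  have "ln (\<integral>y. exp (F n y) \<partial>P) / real n + p - ln (Z n e) / real n = X / real n"
    unfolding X_def using np by (simp add: field_simps)
  moreover have "\<bar>X / real n\<bar> \<le> 2 * \<eta>" using X np by (simp add: abs_divide pos_divide_le_eq mult_ac)
  ultimately show ?thesis by simp
qed

lemma ln_integral_exp_close_to_ln_cover_sum:
  assumes d: "\<delta> > 0"
  shows "\<exists>e0>0. \<forall>e. 0 < e \<and> e < e0 \<longrightarrow>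
    eventually (\<lambda>n. \<bar>ln (\<integral>y. exp (F n y) \<partial>P) / real n + p - ln (Z n e) / real n\<bar> \<le> \<delta>) sequentially"
proof -
  have d2: "\<delta>/2 > 0" using d by simp
  obtain N dF where dF: "dF > 0" and var: "\<And>n x y e. n \<ge> N \<Longrightarrow> e \<le> dF \<Longrightarrow>
      y \<in> bowen_ball phi n x e \<Longrightarrow> \<bar>F n y - F n x\<bar> \<le> real n * (\<delta>/2)"
    by (rule birkhoff_approximable_tempered[OF approx_F d2]) blast
  obtain e1 where e1: "e1 > 0" "\<And>e. 0 < e \<Longrightarrow> e < e1 \<Longrightarrow> \<exists>M. \<forall>n\<ge>M. ln (K n e) \<le> real n * (\<delta>/2)"
    using eventually_ln_K_le[OF d2] by blast
  have "eventually (\<lambda>n. \<bar>ln (\<integral>y. exp (F n y) \<partial>P) / real n + p - ln (Z n e) / real n\<bar> \<le> \<delta>) sequentially"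
    if e: "0 < e" "e < min dF e1" for e
  proof -
    obtain M1 where M1: "\<And>n. n \<ge> M1 \<Longrightarrow> ln (K n e) \<le> real n * (\<delta>/2)" using e1(2)[of e] e by auto
    obtain M2 where M2: "\<And>n. n \<ge> M2 \<Longrightarrow> ln (K n (e/2)) \<le> real n * (\<delta>/2)" using e1(2)[of "e/2"] e by auto
    have "\<bar>ln (\<integral>y. exp (F n y) \<partial>P) / real n + p - ln (Z n e) / real n\<bar> \<le> \<delta>"
      if n: "n \<ge> max (max N 1) (max M1 M2)" for n
    proof -
      have "\<bar>ln (\<integral>y. exp (F n y) \<partial>P) / real n + p - ln (Z n e) / real n\<bar> \<le> 2 * (\<delta>/2)"
      proof (rule ln_integral_exp_near_ln_cover_sum)
        show "\<bar>F n y - F n x\<bar> \<le> real n * (\<delta>/2)" if "y \<in> bowen_ball phi n x e" for x y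
          using var[of n e y x] n e that by simp
      qed (use n e M1 M2 in auto)
      then show ?thesis by simp
    qed
    then show ?thesis unfolding eventually_sequentially by blast
  qed
  moreover have "min dF e1 > 0" using dF e1(1) by simp
  ultimately show ?thesis by blast
qed

lemma ln_integral_exp_bounded:
  obtains C where "eventually (\<lambda>n. \<bar>ln (\<integral>y. exp (F n y) \<partial>P) / real n\<bar> \<le> C) sequentially"
proof -
  obtain g C N where C: "\<And>z. \<bar>g z\<bar> \<le> C" and "continuous_on UNIV g"
    and approx: "\<And>n x. n \<ge> N \<Longrightarrow> \<bar>F n x - birkhoff_sum phi g n x\<bar> \<le> real n * 1"
    by (rule birkhoff_approximable_boundedE[OF approx_F zero_less_one]) blast
  have "\<bar>ln (\<integral>y. exp (F n y) \<partial>P) / real n\<bar> \<le> C + 1" if n: "n \<ge> max N 1" for n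
  proof -
    have "\<bar>F n x\<bar> \<le> real n * (C + 1)" for x
      using approx[of n x] abs_birkhoff_sum_le[where g=g and phi=phi and n=n and x=x, OF C] n by (simp add: algebra_simps abs_le_iff)
    then have "\<bar>ln (\<integral>y. exp (F n y) \<partial>P)\<bar> \<le> real n * (C + 1)"
      by (rule abs_ln_integral_exp_le[OF borel_prob bounded_F])
    then show ?thesis using n by (simp add: abs_divide pos_divide_le_eq mult.commute)
  qed
  then show ?thesis using that unfolding eventually_sequentially by blast
qed

lemma ln_integral_exp_mult_le:
  assumes var_F: "\<And>n x y. n \<ge> N \<Longrightarrow> y \<in> bowen_ball phi n x (2 * c) \<Longrightarrow>
      \<bar>F n y - F n x\<bar> \<le> real n * \<delta>"
    and approx: "\<And>n x. n \<ge> N \<Longrightarrow> \<bar>G n x + F n x - birkhoff_sum phi h n x\<bar> \<le> real n * \<delta>"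
    and var_h: "\<And>x y. y \<in> bowen_ball phi m x c \<Longrightarrow>
      \<bar>birkhoff_sum phi h m y - birkhoff_sum phi h m x\<bar> \<le> real m * \<delta>"
    and K_qm: "ln (K (q * m) (2 * c)) \<le> real (q * m) * \<delta>"
    and K_m: "ln (K m (c/2)) \<le> real m * \<delta>"
    and m: "m \<ge> N" "m \<ge> 1" and q: "q \<ge> 1" and c: "c > 0"
  shows "ln (\<integral>y. exp (F (q * m) y) \<partial>P)
    \<le> real q * ln (\<integral>y. exp (F m y) \<partial>P) + 7 * (real q * (real m * \<delta>))"
proof -
  have qm: "q * m \<ge> N" "q * m \<ge> 1" using m q by (metis le_trans mult_le_mono1 mult_1, simp)
  have c2: "2 * c > 0" using c by simp
  have upper: "ln (\<integral>y. exp (F (q * m) y) \<partial>P)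
      \<le> ln (K (q * m) (2 * c)) + real (q * m) * \<delta> - real (q * m) * p + ln (Z (q * m) (2 * c))"
    and Z_pos: "Z (q * m) (2 * c) > 0"
    using ln_integral_exp_le_ln_cover_sum[OF qm(2) c2 var_F[OF qm(1)]] by auto
  have concat: "ln (Z (q * m) (2 * c)) \<le> 3 * real q * real m * \<delta> + real q * ln (Z m c)"
    by (rule ln_cover_sum_concatenate[OF approx var_h m(1) q c Z_pos])
  have var_m: "\<bar>F m y - F m x\<bar> \<le> real m * \<delta>" if "y \<in> bowen_ball phi m x c" for x y
    using var_F[OF m(1)] bowen_ball_mono[of c "2 * c" phi m x] that c by auto
  have lower: "ln (Z m c) \<le> ln (K m (c/2)) + real m * \<delta> + real m * p + ln (\<integral>y. exp (F m y) \<partial>P)"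
    by (rule ln_cover_sum_le_ln_integral_exp[OF m(2) c var_m])
  define a where "a = real q * (real m * \<delta>)"
  define b where "b = real q * (real m * p)"
  define lZ where "lZ = ln (Z m c)"
  define lI where "lI = ln (\<integral>y. exp (F m y) \<partial>P)"
  have "lZ \<le> real m * \<delta> + real m * \<delta> + real m * p + lI"
    using lower K_m unfolding lZ_def lI_def by linarith
  then have "real q * lZ \<le> real q * (real m * \<delta> + real m * \<delta> + real m * p + lI)"
    by (rule mult_left_mono) simp
  then have "real q * lZ \<le> 2 * a + b + real q * lI" unfolding a_def b_def by (simp add: algebra_simps)
  moreover have "ln (\<integral>y. exp (F (q * m) y) \<partial>P) \<le> ln (K (q * m) (2 * c)) + a - b + ln (Z (q * m) (2 * c))"
    using upper unfolding a_def b_def by (simp add: algebra_simps)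
  moreover have "ln (K (q * m) (2 * c)) \<le> a" using K_qm unfolding a_def by (simp add: algebra_simps)
  moreover have "ln (Z (q * m) (2 * c)) \<le> 3 * a + real q * lZ"
    using concat unfolding a_def lZ_def by (simp add: algebra_simps)
  ultimately have "ln (\<integral>y. exp (F (q * m) y) \<partial>P) \<le> real q * lI + 7 * a" by linarith
  then show ?thesis unfolding a_def lI_def .
qed

lemma ln_integral_exp_le_multiple:
  assumes approx: "\<And>n x. n \<ge> N \<Longrightarrow> \<bar>F n x - birkhoff_sum phi g n x\<bar> \<le> real n * \<delta>"
    and C: "\<And>z. \<bar>g z\<bar> \<le> C" and m: "m \<ge> N" "m \<ge> 1" and n: "n \<ge> m" and d: "\<delta> > 0"
  shows "ln (\<integral>y. exp (F n y) \<partial>P)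
    \<le> ln (\<integral>y. exp (F (n div m * m) y) \<partial>P) + real m * C + 2 * (real n * \<delta>)"
proof -
  define q where "q = n div m"
  define r where "r = n mod m"
  have nqr: "n = q * m + r" unfolding q_def r_def by simp
  have rm: "r < m" unfolding r_def using m by simp
  have q1: "q \<ge> 1" unfolding q_def using div_le_mono[OF n, of m] m by simp
  have qmN: "q * m \<ge> N" using m q1 by (metis le_trans mult_le_mono1 mult_1)
  have nN: "n \<ge> N" using m n by simp
  have C0: "C \<ge> 0" using C[of undefined] by simp
  have "F n x \<le> F (q * m) x + (real m * C + 2 * (real n * \<delta>))" for x
  proof -
    have "birkhoff_sum phi g n x
        = birkhoff_sum phi g (q * m) x + birkhoff_sum phi g r ((phi ^^ (q * m)) x)"
      unfolding nqr by (rule birkhoff_sum_add)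
    moreover have "\<bar>birkhoff_sum phi g r ((phi ^^ (q * m)) x)\<bar> \<le> real r * C"
      by (rule abs_birkhoff_sum_le[where g=g, OF C])
    moreover have "real r * C \<le> real m * C" using rm C0 by (intro mult_right_mono) auto
    moreover have "real (q * m) * \<delta> \<le> real n * \<delta>" using nqr d by (intro mult_right_mono) auto
    ultimately show ?thesis using approx[OF nN, of x] approx[OF qmN, of x] by (simp add: abs_le_iff)
  qed
  then have "ln (\<integral>y. exp (F n y) \<partial>P)
      \<le> (real m * C + 2 * (real n * \<delta>)) + ln (\<integral>y. exp (F (q * m) y) \<partial>P)"
    by (rule ln_integral_exp_le_shift[OF borel_prob bounded_F bounded_F])
  then show ?thesis unfolding q_def by linarith
qed

lemma ln_integral_exp_ratio_le:
  assumes var_F: "\<And>n x y. n \<ge> N \<Longrightarrow> y \<in> bowen_ball phi n x (2 * c) \<Longrightarrow>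
      \<bar>F n y - F n x\<bar> \<le> real n * \<delta>"
    and approx: "\<And>n x. n \<ge> N \<Longrightarrow> \<bar>G n x + F n x - birkhoff_sum phi h n x\<bar> \<le> real n * \<delta>"
    and var_h: "\<And>x y. y \<in> bowen_ball phi m x c \<Longrightarrow>
      \<bar>birkhoff_sum phi h m y - birkhoff_sum phi h m x\<bar> \<le> real m * \<delta>"
    and K_N: "\<And>n. n \<ge> N \<Longrightarrow> ln (K n (2 * c)) \<le> real n * \<delta>"
    and K_m: "ln (K m (c/2)) \<le> real m * \<delta>"
    and approx_F: "\<And>n x. n \<ge> N \<Longrightarrow> \<bar>F n x - birkhoff_sum phi g n x\<bar> \<le> real n * \<delta>"
    and C: "\<And>z. \<bar>g z\<bar> \<le> C"
    and m: "m \<ge> N" "m \<ge> 1" and c: "c > 0" and d: "\<delta> > 0" and n: "n \<ge> m"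
    and large: "real m * (\<bar>ln (\<integral>y. exp (F m y) \<partial>P) / real m\<bar> + \<bar>C\<bar>) \<le> real n * \<delta>"
  shows "ln (\<integral>y. exp (F n y) \<partial>P) / real n \<le> ln (\<integral>y. exp (F m y) \<partial>P) / real m + 10 * \<delta>"
proof -
  define q where "q = n div m"
  have q: "q \<ge> 1" unfolding q_def using div_le_mono[OF n, of m] m by simp
  have qmN: "q * m \<ge> N" using m q by (metis le_trans mult_le_mono1 mult_1)
  have block: "ln (\<integral>y. exp (F (q * m) y) \<partial>P)
      \<le> real q * ln (\<integral>y. exp (F m y) \<partial>P) + 7 * (real q * (real m * \<delta>))"
    by (rule ln_integral_exp_mult_le[OF var_F approx var_h K_N[OF qmN] K_m m q c])
  have rest: "ln (\<integral>y. exp (F n y) \<partial>P)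
      \<le> ln (\<integral>y. exp (F (q * m) y) \<partial>P) + real m * C + 2 * (real n * \<delta>)"
    unfolding q_def by (rule ln_integral_exp_le_multiple[OF approx_F C m n d])
  have "n = q * m + n mod m" unfolding q_def by simp
  moreover have "n mod m < m" using m by simp
  ultimately have "q * m \<le> n" "n < q * m + m" by linarith+
  then have qm: "real q * real m \<le> real n" "real n < real q * real m + real m"
    by (simp_all add: of_nat_mult[symmetric] del: of_nat_mult)
  have "ln (\<integral>y. exp (F n y) \<partial>P) / real n \<le> ln (\<integral>y. exp (F m y) \<partial>P) / real m + (7 + 3) * \<delta>"
    by (rule ratio_le_of_block_bound[OF _ qm]) (use block rest large m d n in auto)
  then show ?thesis by simp
qed

lemma good_scaleE:
  assumes d: "\<delta> > 0"
  obtains g C h c N where "\<And>z. \<bar>g z\<bar> \<le> C" "c > 0" "N \<ge> 1"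
    "\<And>n x y. n \<ge> N \<Longrightarrow> y \<in> bowen_ball phi n x (2 * c) \<Longrightarrow> \<bar>F n y - F n x\<bar> \<le> real n * \<delta>"
    "\<And>n x. n \<ge> N \<Longrightarrow> \<bar>G n x + F n x - birkhoff_sum phi h n x\<bar> \<le> real n * \<delta>"
    "\<And>n x y. y \<in> bowen_ball phi n x c \<Longrightarrow>
      \<bar>birkhoff_sum phi h n y - birkhoff_sum phi h n x\<bar> \<le> real n * \<delta>"
    "\<And>n. n \<ge> N \<Longrightarrow> ln (K n (2 * c)) \<le> real n * \<delta>"
    "\<And>n. n \<ge> N \<Longrightarrow> ln (K n (c/2)) \<le> real n * \<delta>"
    "\<And>n x. n \<ge> N \<Longrightarrow> \<bar>F n x - birkhoff_sum phi g n x\<bar> \<le> real n * \<delta>"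
proof -
  obtain g C N1 where C: "\<And>z. \<bar>g z\<bar> \<le> C" and "continuous_on UNIV g"
    and approx_g: "\<And>n x. n \<ge> N1 \<Longrightarrow> \<bar>F n x - birkhoff_sum phi g n x\<bar> \<le> real n * \<delta>"
    by (rule birkhoff_approximable_boundedE[OF approx_F d]) blast
  obtain N2 dF where dF: "dF > 0" and var_F: "\<And>n x y e. n \<ge> N2 \<Longrightarrow> e \<le> dF \<Longrightarrow>
      y \<in> bowen_ball phi n x e \<Longrightarrow> \<bar>F n y - F n x\<bar> \<le> real n * \<delta>"
    by (rule birkhoff_approximable_tempered[OF approx_F d]) blast
  obtain h N3 where h: "continuous_on UNIV h"
    and approx_h: "\<And>n x. n \<ge> N3 \<Longrightarrow> \<bar>G n x + F n x - birkhoff_sum phi h n x\<bar> \<le> real n * \<delta>"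
    using approx_GF d unfolding birkhoff_approximable_def by blast
  obtain dh where dh: "dh > 0" and var_h: "\<And>n x y e. e \<le> dh \<Longrightarrow> y \<in> bowen_ball phi n x e \<Longrightarrow>
      \<bar>birkhoff_sum phi h n y - birkhoff_sum phi h n x\<bar> \<le> real n * \<delta>"
    using birkhoff_sum_variation[OF h d] by blast
  obtain e1 where e1: "e1 > 0" "\<And>e. 0 < e \<Longrightarrow> e < e1 \<Longrightarrow> \<exists>M. \<forall>n\<ge>M. ln (K n e) \<le> real n * \<delta>"
    using eventually_ln_K_le[OF d] by blast
  define c where "c = min (dF/2) (min dh (e1/4))"
  have c: "c > 0" "2 * c \<le> dF" "c \<le> dh" "2 * c < e1" "c/2 < e1"
    using dF dh e1(1) unfolding c_def by auto
  obtain M1 where M1: "\<And>n. n \<ge> M1 \<Longrightarrow> ln (K n (2 * c)) \<le> real n * \<delta>" using e1(2)[of "2 * c"] c by auto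
  obtain M2 where M2: "\<And>n. n \<ge> M2 \<Longrightarrow> ln (K n (c/2)) \<le> real n * \<delta>" using e1(2)[of "c/2"] c by auto
  define N where "N = max (max N1 (max N2 N3)) (max (max M1 M2) 1)"
  show ?thesis
  proof (rule that[OF C c(1), of N])
    show "\<bar>F n y - F n x\<bar> \<le> real n * \<delta>" if "n \<ge> N" "y \<in> bowen_ball phi n x (2 * c)" for n x y
      using var_F[of n "2 * c" y x] that c(2) by (simp add: N_def)
    show "\<bar>birkhoff_sum phi h n y - birkhoff_sum phi h n x\<bar> \<le> real n * \<delta>"
      if "y \<in> bowen_ball phi n x c" for n x y
      using var_h[OF c(3) that] .
  qed (use approx_g approx_h M1 M2 in \<open>auto simp: N_def\<close>)
qed

lemma ln_integral_exp_almost_decreasing: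
  assumes d: "\<delta> > 0"
  shows "\<exists>N. \<forall>m\<ge>N. eventually (\<lambda>n. ln (\<integral>y. exp (F n y) \<partial>P) / real n
    \<le> ln (\<integral>y. exp (F m y) \<partial>P) / real m + \<delta>) sequentially"
proof -
  define \<delta>' where "\<delta>' = \<delta> / 10"
  have d': "\<delta>' > 0" using d by (simp add: \<delta>'_def)
  obtain g C h c N where C: "\<And>z. \<bar>g z\<bar> \<le> C" and c: "c > 0" and N: "N \<ge> 1"
    and var_F: "\<And>n x y. n \<ge> N \<Longrightarrow> y \<in> bowen_ball phi n x (2 * c) \<Longrightarrow> \<bar>F n y - F n x\<bar> \<le> real n * \<delta>'"
    and approx_h: "\<And>n x. n \<ge> N \<Longrightarrow> \<bar>G n x + F n x - birkhoff_sum phi h n x\<bar> \<le> real n * \<delta>'"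
    and var_h: "\<And>n x y. y \<in> bowen_ball phi n x c \<Longrightarrow>
      \<bar>birkhoff_sum phi h n y - birkhoff_sum phi h n x\<bar> \<le> real n * \<delta>'"
    and K_double: "\<And>n. n \<ge> N \<Longrightarrow> ln (K n (2 * c)) \<le> real n * \<delta>'"
    and K_half: "\<And>n. n \<ge> N \<Longrightarrow> ln (K n (c/2)) \<le> real n * \<delta>'"
    and approx_g: "\<And>n x. n \<ge> N \<Longrightarrow> \<bar>F n x - birkhoff_sum phi g n x\<bar> \<le> real n * \<delta>'"
    by (rule good_scaleE[OF d']) blast
  have "eventually (\<lambda>n. ln (\<integral>y. exp (F n y) \<partial>P) / real n
      \<le> ln (\<integral>y. exp (F m y) \<partial>P) / real m + \<delta>) sequentially" if m: "m \<ge> N" for m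
  proof -
    obtain n0 :: nat where n0: "real m * (\<bar>ln (\<integral>y. exp (F m y) \<partial>P) / real m\<bar> + \<bar>C\<bar>) < real n0 * \<delta>'"
      using ex_less_of_nat_mult[OF d'] by blast
    have "ln (\<integral>y. exp (F n y) \<partial>P) / real n \<le> ln (\<integral>y. exp (F m y) \<partial>P) / real m + \<delta>"
      if n: "n \<ge> max m n0" for n
    proof -
      have "real n0 * \<delta>' \<le> real n * \<delta>'" using n d' by (intro mult_right_mono) auto
      then have large: "real m * (\<bar>ln (\<integral>y. exp (F m y) \<partial>P) / real m\<bar> + \<bar>C\<bar>) \<le> real n * \<delta>'"
        using n0 by linarith
      have "ln (\<integral>y. exp (F n y) \<partial>P) / real n \<le> ln (\<integral>y. exp (F m y) \<partial>P) / real m + 10 * \<delta>'"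
        using n m N by (intro ln_integral_exp_ratio_le[OF var_F approx_h var_h K_double K_half[OF m]
            approx_g C m _ c d' _ large]) auto
      then show ?thesis by (simp add: \<delta>'_def)
    qed
    then show ?thesis unfolding eventually_sequentially by blast
  qed
  then show ?thesis by blast
qed

lemma ln_integral_exp_tendsto:
  "(\<lambda>n. ereal (ln (\<integral>y. exp (F n y) \<partial>P) / real n))
    \<longlonglongrightarrow> pressure phi (\<lambda>n x. G n x + F n x) - ereal p"
proof -
  obtain C where bounded: "eventually (\<lambda>n. \<bar>ln (\<integral>y. exp (F n y) \<partial>P) / real n\<bar> \<le> C) sequentially"
    by (rule ln_integral_exp_bounded)
  obtain L where lim: "(\<lambda>n. ln (\<integral>y. exp (F n y) \<partial>P) / real n) \<longlonglongrightarrow> L"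
    by (rule tendsto_of_eventually_le_plus[OF bounded ln_integral_exp_almost_decreasing])
  have "pressure phi (\<lambda>n x. G n x + F n x) = ereal (L + p)"
    unfolding pressure_cover_sum
    by (rule Lim_at_right_limsup_eq[OF lim ln_integral_exp_close_to_ln_cover_sum])
  then show ?thesis using lim by simp
qed

end

lemma weak_gibbs_setting_of_weak_gibbs:
  fixes phi :: "'a::metric_space \<Rightarrow> 'a"
  assumes "compact (UNIV :: 'a set)" "continuous_on UNIV phi"
    and "class_A phi G" "weak_gibbs phi G P" "class_A phi F"
  obtains p K where "pressure phi G = ereal p" "weak_gibbs_setting phi P G F p K"
proof -
  have P: "borel_prob P" and finite: "\<bar>pressure phi G\<bar> \<noteq> \<infinity>"
    using assms(4) by (auto simp: weak_gibbs_def)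
  define p where "p = real_of_ereal (pressure phi G)"
  have pressure_G: "pressure phi G = ereal p" unfolding p_def using finite by (cases "pressure phi G") auto
  obtain K :: "nat \<Rightarrow> real \<Rightarrow> real" where
    K: "\<forall>n\<ge>1. \<forall>eps>0. K n eps \<ge> 1 \<and>
           (\<forall>x. exp (G n x - real n * p) / K n eps \<le> measure P (bowen_ball phi n x eps)
              \<and> measure P (bowen_ball phi n x eps) \<le> K n eps * exp (G n x - real n * p))"
    and K_limit: "((\<lambda>eps. limsup (\<lambda>n. ereal (ln (K n eps) / real n))) \<longlongrightarrow> 0) (at_right 0)"
    using assms(4) unfolding weak_gibbs_def p_def by blast
  interpret compact_dynamics phi by unfold_locales (use assms(1,2) in auto)
  have "weak_gibbs_setting phi P G F p K"
  proof unfold_locales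
    show "birkhoff_approximable phi F" by (rule class_A_imp_birkhoff_approximable[OF assms(5)])
    show "birkhoff_approximable phi (\<lambda>n x. G n x + F n x)"
      using assms(3,5) by (intro birkhoff_approximable_add class_A_imp_birkhoff_approximable)
  qed (use assms(1,2,5) P K K_limit in \<open>auto simp: class_A_def\<close>)
  then show ?thesis using pressure_G that by blast
qed

theorem lemma5p4:
  fixes phi :: "'a::metric_space \<Rightarrow> 'a"
    and G G' :: "nat \<Rightarrow> 'a \<Rightarrow> real"
    and P :: "'a measure"
  assumes "compact (UNIV :: 'a set)"
    and "continuous_on UNIV phi"
    and "top_entropy phi < \<infinity>"
    and "entropy_usc phi"
    and "class_A phi G"
    and "weak_gibbs phi G P"
    and "class_A phi G'"
  shows "(\<lambda>n. ereal (ln (integral\<^sup>L P (\<lambda>x. exp (G' n x))) / real n))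
           \<longlonglongrightarrow> pressure phi (\<lambda>n x. G n x + G' n x) - pressure phi G"
proof -
  obtain p K where pressure_G: "pressure phi G = ereal p" and gibbs: "weak_gibbs_setting phi P G G' p K"
    using weak_gibbs_setting_of_weak_gibbs[OF assms(1,2,5,6,7)] by blast
  show ?thesis using weak_gibbs_setting.ln_integral_exp_tendsto[OF gibbs] pressure_G by simp
qed

end
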